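(* Let $q$ be a prime power, $t\ge1$, $F=\mathbb{F}_{q^t}$, $A\subseteq F$ with $|A|=n\le q^t$, and let $k$ satisfy $r=n-k\ge q^s$ for some integer $s<t$. Let $W=\{0,w_1,\dots,w_{q^s-1}\}$ be an $\mathbb{F}_q$-subspace of $F$ of dimension $s$, let $\alpha^*\in A$, let $\{\beta_1,\dots,\beta_t\}$ be an arbitrary $\mathbb{F}_q$-basis of $F$, and set \[ g_i(x)=\beta_i\prod_{j=1}^{q^s-1}\Big(x-\big(\alpha^*-w_j^{-1}\beta_i\big)\Big),\quad i=1,\dots,t. \] Then the check polynomials $g_1,\dots,g_t$ yield a linear repair scheme over $\mathbb{F}_q$ for the codeword symbol $f(\alpha^* )$ of the Reed-Solomon code $\mathrm{RS}(A,k)$ with repair bandwidth at most $(n-1)(t-s)\log_2 q$ bits. Moreover, when $n=|F|=q^t$ and $r=q^s$, this repair bandwidth is optimal among linear repair schemes over $\mathbb{F}_q$.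
   Context: $\mathrm{RS}(A,k)=\{(f(\alpha))_{\alpha\in A} : f\in F[x],\ \deg f<k\}$, with $f(\alpha)$ stored at node $\alpha$. Every polynomial $g\in F[x]$ of degree at most $r-1$ gives a dual codeword (a check): $\sum_{\alpha\in A}\lambda_\alpha g(\alpha)f(\alpha)=0$ for fixed nonzero multipliers $\lambda_\alpha$. Given checks $g_1,\dots,g_t$ of degree at most $r-1$ with $\mathrm{rank}_{\mathbb{F}_q}\{g_i(\alpha^* )\}_i=t$, one obtains a linear repair scheme over $\mathbb{F}_q$: applying $\mathrm{Tr}_{F/\mathbb{F}_q}$ to the check equations, the replacement node recovers $t$ independent traces of $f(\alpha^* )$ by downloading from each node $\alpha\ne\alpha^*$ exactly $b_\alpha=\mathrm{rank}_{\mathbb{F}_q}\{g_1(\alpha),\dots,g_t(\alpha)\}$ sub-symbols of $\mathbb{F}_q$; the repair bandwidth is $\sum_{\alpha\neq\alpha^*}b_\alpha$ sub-symbols, i.e. $\log_2 q$ times that many bits. In general a linear repair scheme over $\mathbb{F}_q$ is one where each node sends $\mathbb{F}_q$-linear functions of its symbol and $f(\alpha^* )$ is recovered $\mathbb{F}_q$-linearly; its bandwidth is the total amount downloaded. *)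

theory Defs
  imports "HOL-Computational_Algebra.Polynomial" "HOL-Computational_Algebra.Primes"
begin

text \<open>F is modelled by a finite field type 'a; the base field F_q is a subfield K of it.\<close>

definition is_subfield :: "'a::field set \<Rightarrow> bool" where
  "is_subfield K \<longleftrightarrow> 0 \<in> K \<and> 1 \<in> K \<and> (\<forall>x\<in>K. \<forall>y\<in>K. x + y \<in> K \<and> x - y \<in> K \<and> x * y \<in> K)
     \<and> (\<forall>x\<in>K. x \<noteq> 0 \<longrightarrow> inverse x \<in> K)"

definition k_indep :: "'a::field set \<Rightarrow> 'a set \<Rightarrow> bool" where
  "k_indep K S \<longleftrightarrow> finite S \<and> (\<forall>c. (\<forall>v\<in>S. c v \<in> K) \<and> (\<Sum>v\<in>S. c v * v) = 0 \<longrightarrow> (\<forall>v\<in>S. c v = 0))"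

definition k_span :: "'a::field set \<Rightarrow> 'a set \<Rightarrow> 'a set" where
  "k_span K S = {y. \<exists>c. (\<forall>v\<in>S. c v \<in> K) \<and> y = (\<Sum>v\<in>S. c v * v)}"

definition k_rank :: "'a::field set \<Rightarrow> 'a set \<Rightarrow> nat" where
  "k_rank K S = Max {card T | T. T \<subseteq> S \<and> k_indep K T}"

definition k_subspace :: "'a::field set \<Rightarrow> 'a set \<Rightarrow> bool" where
  "k_subspace K W \<longleftrightarrow> 0 \<in> W \<and> (\<forall>x\<in>W. \<forall>y\<in>W. x + y \<in> W) \<and> (\<forall>c\<in>K. \<forall>x\<in>W. c * x \<in> W)"

definition k_basis :: "'a::field set \<Rightarrow> 'a set \<Rightarrow> bool" where
  "k_basis K B \<longleftrightarrow> k_indep K B \<and> k_span K B = UNIV"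

definition k_linear_functional :: "'a::field set \<Rightarrow> ('a \<Rightarrow> 'a) \<Rightarrow> bool" where
  "k_linear_functional K \<mu> \<longleftrightarrow> (\<forall>x. \<mu> x \<in> K) \<and> (\<forall>x y. \<mu> (x + y) = \<mu> x + \<mu> y)
     \<and> (\<forall>c\<in>K. \<forall>x. \<mu> (c * x) = c * \<mu> x)"

text \<open>Codewords of RS(A,k) are evaluations of polynomials f with deg f < k (f = 0 included).\<close>

definition rs_msg :: "nat \<Rightarrow> 'a::field poly \<Rightarrow> bool" where
  "rs_msg k f \<longleftrightarrow> f = 0 \<or> degree f < k"

text \<open>A linear repair scheme over K for node astar of RS(A,k), where node alpha \<noteq> astar
  sends b alpha sub-symbols (elements of K), each a K-linear function of f(alpha), and
  f(astar) is recovered by a K-linear map R of the downloaded sub-symbols.\<close>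

definition download ::
  "'a set \<Rightarrow> 'a \<Rightarrow> ('a \<Rightarrow> nat) \<Rightarrow> ('a \<Rightarrow> nat \<Rightarrow> 'a \<Rightarrow> 'a) \<Rightarrow> 'a::field poly \<Rightarrow> 'a \<Rightarrow> nat \<Rightarrow> 'a" where
  "download A astar b \<mu> f \<alpha> j = (if \<alpha> \<in> A - {astar} \<and> j < b \<alpha> then \<mu> \<alpha> j (poly f \<alpha>) else 0)"

definition linear_repair_scheme ::
  "'a::field set \<Rightarrow> 'a set \<Rightarrow> nat \<Rightarrow> 'a \<Rightarrow> ('a \<Rightarrow> nat) \<Rightarrow> bool" where
  "linear_repair_scheme K A k astar b \<longleftrightarrow>
     (\<exists>\<mu> R. (\<forall>\<alpha> j. k_linear_functional K (\<mu> \<alpha> j))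
        \<and> (\<forall>x y c. (\<forall>\<alpha> j. x \<alpha> j \<in> K) \<and> (\<forall>\<alpha> j. y \<alpha> j \<in> K) \<and> c \<in> K \<longrightarrow>
              R (\<lambda>\<alpha> j. c * x \<alpha> j + y \<alpha> j) = c * R x + R y)
        \<and> (\<forall>f. rs_msg k f \<longrightarrow> R (download A astar b \<mu> f) = poly f astar))"

definition bandwidth :: "'a set \<Rightarrow> 'a \<Rightarrow> ('a \<Rightarrow> nat) \<Rightarrow> nat" where
  "bandwidth A astar b = (\<Sum>\<alpha>\<in>A - {astar}. b \<alpha>)"

definition bandwidth_bits :: "nat \<Rightarrow> 'a set \<Rightarrow> 'a \<Rightarrow> ('a \<Rightarrow> nat) \<Rightarrow> real" where
  "bandwidth_bits q A astar b = real (bandwidth A astar b) * log 2 (real q)"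

definition check_poly :: "'a set \<Rightarrow> 'a \<Rightarrow> (nat \<Rightarrow> 'a) \<Rightarrow> nat \<Rightarrow> 'a::field poly" where
  "check_poly W astar \<beta> i =
     smult (\<beta> i) (\<Prod>w\<in>W - {0}. [:- (astar - inverse w * \<beta> i), 1:])"

definition check_b :: "'a::field set \<Rightarrow> (nat \<Rightarrow> 'a poly) \<Rightarrow> nat \<Rightarrow> 'a \<Rightarrow> nat" where
  "check_b K g t \<alpha> = k_rank K ((\<lambda>i. poly (g i) \<alpha>) ` {1..t})"

end

theory Submission
  imports Defs "HOL-Library.FuncSet"
begin

text \<open>For a node a \<noteq> a*, the value g_i(a) is, up to a nonzero constant, the linearized
  subspace polynomial of the q^s-element space (a - a*) W evaluated at beta_i. That map is
  F_q-linear with a kernel of size q^s, so the g_i(a) span a space of dimension at most t - s;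
  at a* the values are a nonzero multiple of the Frobenius images beta_i^(q^s) of the basis,
  hence of rank t. Taking traces of the dual-code equations recovers t independent traces of
  f(a*), which determine it.

  For optimality, the trace form turns any linear repair scheme into identities
  c f(a*) = sum_a v_c(a) f(a) for every c in F, with v_c depending F_q-linearly on c. As no
  nonzero polynomial of degree < k vanishes at r nodes, each v_c with c \<noteq> 0 has at most
  r - 1 = q^s - 1 zeros, whereas at node a at least q^(t - b_a) of the c make v_c(a) vanish.
  Counting the pairs (c, a) with v_c(a) = 0 and using convexity of b \<mapsto> q^(-b) yields
  sum_a b_a \<ge> (n - 1)(t - s).\<close>

section \<open>Polynomials over a field and counting\<close>

lemma power_card_eq_self:
  fixes H :: "'a::field set"
  assumes "finite H" and "c \<in> H" and "0 \<in> H"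
    and mult: "\<And>x y. x \<in> H \<Longrightarrow> y \<in> H \<Longrightarrow> x * y \<in> H"
    and inverse: "\<And>x. x \<in> H \<Longrightarrow> x \<noteq> 0 \<Longrightarrow> inverse x \<in> H"
  shows "c ^ card H = c"
proof (cases "c = 0")
  case True
  then show ?thesis using assms(1,3) card_gt_0_iff by fastforce
next
  case False
  let ?H = "H - {0}"
  have "(\<Prod>y\<in>?H. c * y) = (\<Prod>y\<in>?H. y)"
    by (rule prod.reindex_bij_witness[of _ "\<lambda>y. y / c" "\<lambda>y. c * y"])
       (use False assms(2) mult inverse in \<open>auto simp: divide_inverse\<close>)
  moreover have "(\<Prod>y\<in>?H. c * y) = c ^ card ?H * (\<Prod>y\<in>?H. y)"
    by (simp add: prod.distrib)
  moreover have "(\<Prod>y\<in>?H. y) \<noteq> 0" using assms(1) by simp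
  ultimately have "c ^ card ?H = 1" by simp
  moreover have "card H = Suc (card ?H)" using assms(1,3) card_Suc_Diff1 by metis
  ultimately show ?thesis by simp
qed

lemma card_range_mult_card_kernel:
  fixes \<phi> :: "'a::{ab_group_add,finite} \<Rightarrow> 'b"
  assumes fibres: "\<And>x y. \<phi> x = \<phi> y \<longleftrightarrow> \<phi> (x - y) = \<phi> 0"
  shows "card (range \<phi>) * card {x. \<phi> x = \<phi> 0} = card (UNIV :: 'a set)"
proof -
  define s where "s y = (SOME x. \<phi> x = y)" for y
  have s: "\<phi> (s y) = y" if "y \<in> range \<phi>" for y
    using that unfolding s_def by (auto intro: someI)
  have "bij_betw (\<lambda>x. (\<phi> x, x - s (\<phi> x))) UNIV (range \<phi> \<times> {x. \<phi> x = \<phi> 0})"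
  proof (rule bij_betw_byWitness[where f' = "\<lambda>(y, u). s y + u"])
    show "\<forall>p\<in>range \<phi> \<times> {x. \<phi> x = \<phi> 0}.
        (\<lambda>x. (\<phi> x, x - s (\<phi> x))) ((\<lambda>(y, u). s y + u) p) = p"
    proof
      fix p assume "p \<in> range \<phi> \<times> {x. \<phi> x = \<phi> 0}"
      then obtain x u where p: "p = (\<phi> x, u)" and u: "\<phi> u = \<phi> 0" by auto
      then have "\<phi> (s (\<phi> x) + u) = \<phi> (s (\<phi> x))" using fibres[of "s (\<phi> x) + u" "s (\<phi> x)"] by simp
      then have "\<phi> (s (\<phi> x) + u) = \<phi> x" using s by simp
      then show "(\<lambda>x. (\<phi> x, x - s (\<phi> x))) ((\<lambda>(y, u). s y + u) p) = p" using p by simp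
    qed
    show "(\<lambda>x. (\<phi> x, x - s (\<phi> x))) ` UNIV \<subseteq> range \<phi> \<times> {x. \<phi> x = \<phi> 0}"
      using s fibres by (auto simp del: diff_eq_eq)
  qed auto
  then show ?thesis by (simp add: bij_betw_same_card card_cartesian_product)
qed

lemma degree_prod_monic_linear:
  fixes a :: "'b \<Rightarrow> 'a::field"
  shows "degree (\<Prod>u\<in>S. [:a u, 1:]) = card S"
proof (cases "finite S")
  case True
  have "degree (\<Prod>u\<in>S. [:a u, 1:]) = (\<Sum>u\<in>S. degree [:a u, 1:])"
    by (rule degree_prod_eq_sum_degree) auto
  then show ?thesis by simp
qed simp

lemma coeff_prod_monic_linear:
  fixes a :: "'b \<Rightarrow> 'a::field"
  shows "coeff (\<Prod>u\<in>S. [:a u, 1:]) (card S) = 1"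
  using lead_coeff_prod[of "\<lambda>u. [:a u, 1:]" S] by (simp add: degree_prod_monic_linear)

lemma poly_eq_0_if_card_roots_gt_degree:
  fixes D :: "'a::field poly"
  assumes "finite R" and "\<And>x. x \<in> R \<Longrightarrow> poly D x = 0" and "degree D < card R"
  shows "D = 0"
proof (rule ccontr)
  assume D: "D \<noteq> 0"
  then have "card R \<le> card {x. poly D x = 0}"
    using assms(2) poly_roots_finite by (intro card_mono) auto
  also have "\<dots> \<le> degree D" by (rule card_poly_roots_bound[OF D])
  finally show False using assms(3) by simp
qed

text \<open>As a polynomial in x the difference of the two sides has degree < |U|, the leading terms
  cancelling, and it vanishes on U because translation by an element of U permutes U.\<close>

lemma prod_translate_subgroup_add:
  fixes U :: "'a::field set"
  assumes "finite U" and "0 \<in> U"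
    and add: "\<And>u v. u \<in> U \<Longrightarrow> v \<in> U \<Longrightarrow> u + v \<in> U"
    and diff: "\<And>u v. u \<in> U \<Longrightarrow> v \<in> U \<Longrightarrow> u - v \<in> U"
  shows "(\<Prod>u\<in>U. (x + y - u)) = (\<Prod>u\<in>U. (x - u)) + (\<Prod>u\<in>U. (y - u))"
proof -
  define N where "N = card U"
  define Py where "Py = (\<Prod>u\<in>U. [:y - u, 1:])"
  define P0 where "P0 = (\<Prod>u\<in>U. [:- u, 1:])"
  define D where "D = Py - P0 - [:\<Prod>u\<in>U. (y - u):]"
  have N: "N \<ge> 1" using assms(1,2) unfolding N_def by (metis card_0_eq empty_iff less_one not_less)
  have poly_Py: "poly Py x = (\<Prod>u\<in>U. (y - u + x))" for x unfolding Py_def by (simp add: poly_prod)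
  have poly_P0: "poly P0 x = (\<Prod>u\<in>U. (x - u))" for x unfolding P0_def by (simp add: poly_prod)
  have "D = 0"
  proof (rule poly_eq_0_if_card_roots_gt_degree[OF assms(1)])
    show "poly D x = 0" if x: "x \<in> U" for x
    proof -
      have "(\<Prod>u\<in>U. (y - u + x)) = (\<Prod>u\<in>U. (y - u))"
        by (rule prod.reindex_bij_witness[of _ "\<lambda>u. u + x" "\<lambda>u. u - x"])
           (use x add diff in \<open>auto simp: algebra_simps\<close>)
      moreover have "(\<Prod>u\<in>U. (x - u)) = 0" using x assms(1) by (intro prod_zero) auto
      ultimately show ?thesis unfolding D_def by (simp add: poly_Py poly_P0)
    qed
    have Py: "degree Py = N" "coeff Py N = 1" and P0: "degree P0 = N" "coeff P0 N = 1"
      unfolding Py_def P0_def N_def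
      by (simp_all only: degree_prod_monic_linear coeff_prod_monic_linear)
    have deg_D: "degree D \<le> N"
      unfolding D_def using Py P0 by (intro degree_diff_le) auto
    have "coeff [:\<Prod>u\<in>U. (y - u):] N = 0" using N by (cases N) simp_all
    then have coeff_D: "coeff D N = 0" unfolding D_def using Py P0 by simp
    show "degree D < card U"
    proof (rule ccontr)
      assume "\<not> degree D < card U"
      then have "degree D = N" using deg_D N_def by simp
      then show False using coeff_D N by (metis leading_coeff_0_iff degree_0 not_one_le_zero)
    qed
  qed
  then have "poly D x = 0" by simp
  then show ?thesis unfolding D_def using poly_Py poly_P0 by (simp add: algebra_simps)
qed

text \<open>The multipliers lambda_a of the dual code of RS(A, k): compare the coefficients of
  x^(n-1) in h and in its Lagrange interpolant.\<close>

lemma lagrange_weighted_sum_eq_0: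
  fixes A :: "'a::field set" and h :: "'a poly"
  assumes fin: "finite A" and deg: "h = 0 \<or> degree h + 2 \<le> card A"
  shows "(\<Sum>\<alpha>\<in>A. poly h \<alpha> * inverse (\<Prod>\<beta>\<in>A - {\<alpha>}. (\<alpha> - \<beta>))) = 0"
proof (cases "h = 0")
  case False
  define n where "n = card A"
  define lam where "lam \<alpha> = inverse (\<Prod>\<beta>\<in>A - {\<alpha>}. (\<alpha> - \<beta>))" for \<alpha>
  define P where "P \<alpha> = (\<Prod>\<beta>\<in>A - {\<alpha>}. [:- \<beta>, 1:])" for \<alpha>
  define I where "I = (\<Sum>\<alpha>\<in>A. smult (poly h \<alpha> * lam \<alpha>) (P \<alpha>))"
  have deg_h: "degree h + 2 \<le> n" using deg False n_def by simp
  have card_A: "card (A - {\<alpha>}) = n - 1" if "\<alpha> \<in> A" for \<alpha> using fin that n_def by simp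
  have deg_P: "degree (P \<alpha>) = n - 1" and coeff_P: "coeff (P \<alpha>) (n - 1) = 1" if "\<alpha> \<in> A" for \<alpha>
    unfolding P_def using degree_prod_monic_linear[of "\<lambda>\<beta>. - \<beta>" "A - {\<alpha>}"]
      coeff_prod_monic_linear[of "\<lambda>\<beta>. - \<beta>" "A - {\<alpha>}"] card_A[OF that] by simp_all
  have poly_P: "poly (P \<alpha>) \<gamma> = (\<Prod>\<beta>\<in>A - {\<alpha>}. (\<gamma> - \<beta>))" for \<alpha> \<gamma>
    unfolding P_def by (simp add: poly_prod)
  have poly_I: "poly I \<gamma> = poly h \<gamma>" if "\<gamma> \<in> A" for \<gamma>
  proof -
    have "poly I \<gamma> = (\<Sum>\<alpha>\<in>A. poly h \<alpha> * lam \<alpha> * poly (P \<alpha>) \<gamma>)"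
      unfolding I_def by (simp add: poly_sum)
    also have "\<dots> = poly h \<gamma> * lam \<gamma> * poly (P \<gamma>) \<gamma>
        + (\<Sum>\<alpha>\<in>A - {\<gamma>}. poly h \<alpha> * lam \<alpha> * poly (P \<alpha>) \<gamma>)"
      using fin that by (simp add: sum.remove)
    also have "(\<Sum>\<alpha>\<in>A - {\<gamma>}. poly h \<alpha> * lam \<alpha> * poly (P \<alpha>) \<gamma>) = 0"
      unfolding poly_P using fin that by (intro sum.neutral) (auto intro: prod_zero)
    also have "poly h \<gamma> * lam \<gamma> * poly (P \<gamma>) \<gamma> = poly h \<gamma>"
      unfolding lam_def poly_P using fin by (simp add: prod_zero_iff)
    finally show ?thesis by simp
  qed
  have "degree I \<le> n - 1" unfolding I_def
    by (intro degree_sum_le fin) (use deg_P in \<open>auto intro: order.trans[OF degree_smult_le]\<close>)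
  then have "degree (h - I) < card A"
    using deg_h n_def by (intro le_less_trans[OF degree_diff_le]) auto
  then have "h - I = 0"
    using poly_I by (intro poly_eq_0_if_card_roots_gt_degree[OF fin]) auto
  then have "coeff I (n - 1) = 0" using deg_h by (simp add: coeff_eq_0)
  moreover have "coeff I (n - 1) = (\<Sum>\<alpha>\<in>A. poly h \<alpha> * lam \<alpha>)"
    unfolding I_def coeff_sum using coeff_P by (intro sum.cong) auto
  ultimately show ?thesis unfolding lam_def by simp
qed simp

lemma k_le_card_support_of_evaluation_relation:
  fixes A :: "'a::field set"
  assumes "finite A" and "astar \<notin> A" and "c \<noteq> 0"
    and relation: "\<And>f. rs_msg k f \<Longrightarrow> c * poly f astar = (\<Sum>\<alpha>\<in>A. v \<alpha> * poly f \<alpha>)"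
  shows "k \<le> card {\<alpha>\<in>A. v \<alpha> \<noteq> 0}"
proof (rule ccontr)
  define S where "S = {\<alpha>\<in>A. v \<alpha> \<noteq> 0}"
  define f where "f = (\<Prod>\<gamma>\<in>S. [:- \<gamma>, 1:])"
  assume "\<not> k \<le> card {\<alpha>\<in>A. v \<alpha> \<noteq> 0}"
  moreover have "degree f = card S" unfolding f_def by (rule degree_prod_monic_linear)
  ultimately have "rs_msg k f" unfolding rs_msg_def S_def by simp
  moreover have "v \<alpha> * poly f \<alpha> = 0" if "\<alpha> \<in> A" for \<alpha>
    using that \<open>finite A\<close> unfolding f_def S_def by (auto simp: poly_prod prod_zero_iff)
  moreover have "poly f astar \<noteq> 0"
    using assms(1,2) unfolding f_def S_def by (auto simp: poly_prod prod_zero_iff)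
  ultimately have "c * poly f astar = 0" using relation[of f] by (simp add: sum.neutral)
  then show False using \<open>poly f astar \<noteq> 0\<close> \<open>c \<noteq> 0\<close> by simp
qed

lemma exp_ge_tangent_at_power:
  assumes "(Q::real) > 1"
  shows "Q ^ s * (1 + (e - real s) * ln Q) \<le> exp (e * ln Q)"
proof -
  have "Q ^ s = exp (real s * ln Q)" using assms by (simp add: ln_realpow[symmetric])
  moreover have "exp (e * ln Q) = exp (real s * ln Q) * exp ((e - real s) * ln Q)"
    by (simp add: exp_add[symmetric] algebra_simps)
  moreover have "1 + (e - real s) * ln Q \<le> exp ((e - real s) * ln Q)"
    by (rule exp_ge_add_one_self)
  ultimately show ?thesis by simp
qed

lemma sum_exponents_ge_if_sum_powers_le:
  fixes Q :: real and b :: "'b \<Rightarrow> nat"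
  assumes Q: "Q > 1"
    and le: "(\<Sum>\<alpha>\<in>X. Q ^ t / Q ^ b \<alpha>) \<le> real (card X) * Q ^ s"
  shows "real (card X) * (real t - real s) \<le> (\<Sum>\<alpha>\<in>X. real (b \<alpha>))"
proof -
  have tangent: "Q ^ s * (1 + (real t - real (b \<alpha>) - real s) * ln Q) \<le> Q ^ t / Q ^ b \<alpha>" for \<alpha>
  proof -
    have "Q ^ s * (1 + (real t - real (b \<alpha>) - real s) * ln Q) \<le> exp ((real t - real (b \<alpha>)) * ln Q)"
      by (rule exp_ge_tangent_at_power[OF Q])
    also have "\<dots> = Q ^ t / Q ^ b \<alpha>"
      using Q by (simp add: left_diff_distrib exp_diff ln_realpow[symmetric])
    finally show ?thesis .
  qed
  have "(\<Sum>\<alpha>\<in>X. Q ^ s * (1 + (real t - real (b \<alpha>) - real s) * ln Q))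
      = (\<Sum>\<alpha>\<in>X. Q ^ s + Q ^ s * ln Q * (real t - real s - real (b \<alpha>)))"
    by (intro sum.cong refl) (simp add: algebra_simps)
  also have "\<dots> = real (card X) * Q ^ s + Q ^ s * ln Q * (\<Sum>\<alpha>\<in>X. real t - real s - real (b \<alpha>))"
    by (simp add: sum.distrib sum_distrib_left)
  moreover have "(\<Sum>\<alpha>\<in>X. Q ^ s * (1 + (real t - real (b \<alpha>) - real s) * ln Q)) \<le> real (card X) * Q ^ s"
    using sum_mono[of X, OF tangent, of "\<lambda>\<alpha>. \<alpha>"] le by linarith
  ultimately have "Q ^ s * ln Q * (\<Sum>\<alpha>\<in>X. real t - real s - real (b \<alpha>)) \<le> 0"
    by linarith
  moreover have "Q ^ s * ln Q > 0" using Q by simp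
  ultimately have "(\<Sum>\<alpha>\<in>X. real t - real s - real (b \<alpha>)) \<le> 0"
    by (metis mult_le_cancel_left_pos mult_zero_right)
  then show ?thesis by (simp add: sum_subtractf)
qed

lemma sum_exponents_ge_if_sum_counts_le:
  fixes q :: nat and b Z :: "'b \<Rightarrow> nat"
  assumes q: "q \<ge> 2" and "s \<le> t"
    and pointwise: "\<And>\<alpha>. \<alpha> \<in> X \<Longrightarrow> q ^ t \<le> q ^ b \<alpha> * Z \<alpha>"
    and total: "(\<Sum>\<alpha>\<in>X. Z \<alpha>) \<le> card X * q ^ s"
  shows "card X * (t - s) \<le> (\<Sum>\<alpha>\<in>X. b \<alpha>)"
proof -
  have "real q ^ t / real q ^ b \<alpha> \<le> real (Z \<alpha>)" if "\<alpha> \<in> X" for \<alpha>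
  proof -
    have "real (q ^ t) \<le> real (q ^ b \<alpha> * Z \<alpha>)" using pointwise[OF that] by (simp only: of_nat_le_iff)
    then show ?thesis using q by (simp add: divide_le_eq mult.commute)
  qed
  then have "(\<Sum>\<alpha>\<in>X. real q ^ t / real q ^ b \<alpha>) \<le> (\<Sum>\<alpha>\<in>X. real (Z \<alpha>))" by (rule sum_mono)
  also have "\<dots> \<le> real (card X) * real q ^ s"
  proof -
    have "real (\<Sum>\<alpha>\<in>X. Z \<alpha>) \<le> real (card X * q ^ s)" using total by (simp only: of_nat_le_iff)
    then show ?thesis by simp
  qed
  finally have le: "(\<Sum>\<alpha>\<in>X. real q ^ t / real q ^ b \<alpha>) \<le> real (card X) * real q ^ s" .
  have "real (card X) * (real t - real s) \<le> (\<Sum>\<alpha>\<in>X. real (b \<alpha>))"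
    by (rule sum_exponents_ge_if_sum_powers_le[OF _ le]) (use q in simp)
  then have "real (card X * (t - s)) \<le> real (\<Sum>\<alpha>\<in>X. b \<alpha>)" using \<open>s \<le> t\<close> by (simp add: of_nat_diff)
  then show ?thesis by (simp only: of_nat_le_iff)
qed

lemma sum_card_zero_sets_le:
  fixes X :: "'x set" and Y :: "'y set"
  assumes "finite X" "finite Y" "z \<in> X" "\<And>y. P z y"
    and few: "\<And>x. x \<in> X - {z} \<Longrightarrow> card {y\<in>Y. P x y} \<le> m"
  shows "(\<Sum>y\<in>Y. card {x\<in>X. P x y}) \<le> card Y + (card X - 1) * m"
proof -
  have split: "card {x\<in>X. P x y} = Suc (card {x\<in>X - {z}. P x y})" for y
  proof -
    have "{x\<in>X. P x y} = insert z {x\<in>X - {z}. P x y}" using assms(3,4) by auto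
    then show ?thesis using assms(1) by simp
  qed
  have count: "card {u\<in>U. Q u} = (\<Sum>u\<in>U. if Q u then 1 else 0)" if "finite U" for U Q
    using sum.inter_filter[OF that, of "\<lambda>_. 1::nat" Q] by simp
  have "(\<Sum>y\<in>Y. card {x\<in>X - {z}. P x y}) = (\<Sum>y\<in>Y. \<Sum>x\<in>X - {z}. if P x y then 1 else 0)"
    using assms(1) by (intro sum.cong refl count) simp
  also have "\<dots> = (\<Sum>x\<in>X - {z}. \<Sum>y\<in>Y. if P x y then 1 else 0)"
    by (rule sum.swap)
  also have "\<dots> = (\<Sum>x\<in>X - {z}. card {y\<in>Y. P x y})"
    using assms(2) by (intro sum.cong refl count[symmetric])
  also have "\<dots> \<le> (\<Sum>x\<in>X - {z}. m)"
    by (rule sum_mono[OF few])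
  also have "\<dots> = (card X - 1) * m"
    using assms(1,3) by simp
  finally show ?thesis by (simp add: split sum_Suc)
qed

section \<open>A subfield of a finite field and the trace\<close>

definition frob_trace :: "nat \<Rightarrow> nat \<Rightarrow> 'a::field \<Rightarrow> 'a" where
  "frob_trace q t x = (\<Sum>j<t. x ^ (q ^ j))"

definition k_linear :: "'a::field set \<Rightarrow> ('a \<Rightarrow> 'a) \<Rightarrow> bool" where
  "k_linear K L \<longleftrightarrow> (\<forall>x y. L (x + y) = L x + L y) \<and> (\<forall>c\<in>K. \<forall>x. L (c * x) = c * L x)"

locale subfield_extension =
  fixes K :: "'a::{field,finite} set" and q t :: nat
  assumes K_subfield: "is_subfield K" and K_card: "card K = q"
    and UNIV_card: "card (UNIV::'a set) = q ^ t"
    and t_pos: "t \<ge> 1" and q_prime_power: "\<exists>p m. prime p \<and> m > 0 \<and> q = p ^ m"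
begin

abbreviation "tr \<equiv> frob_trace q t"

lemma K_0 [simp]: "0 \<in> K" and K_1 [simp]: "1 \<in> K"
  and K_add [simp]: "x \<in> K \<Longrightarrow> y \<in> K \<Longrightarrow> x + y \<in> K"
  and K_diff [simp]: "x \<in> K \<Longrightarrow> y \<in> K \<Longrightarrow> x - y \<in> K"
  and K_mult [simp]: "x \<in> K \<Longrightarrow> y \<in> K \<Longrightarrow> x * y \<in> K"
  using K_subfield unfolding is_subfield_def by auto

lemma K_inverse: "x \<in> K \<Longrightarrow> inverse x \<in> K"
  using K_subfield unfolding is_subfield_def by (cases "x = 0") auto

lemma K_uminus: "x \<in> K \<Longrightarrow> - x \<in> K"
  using K_diff[of 0 x] by simp

lemma K_divide: "x \<in> K \<Longrightarrow> y \<in> K \<Longrightarrow> x / y \<in> K"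
  by (simp add: divide_inverse K_inverse)

lemma q_ge_2: "q \<ge> 2"
proof -
  have "card {0::'a, 1} \<le> card K" by (intro card_mono) auto
  then show ?thesis using K_card by simp
qed

lemma K_power_q: "c \<in> K \<Longrightarrow> c ^ q = c"
  using power_card_eq_self[of K c] K_card K_inverse by auto

lemma K_power_q_power: "c \<in> K \<Longrightarrow> c ^ (q ^ j) = c"
proof (induction j)
  case (Suc j)
  have "c ^ (q ^ Suc j) = (c ^ (q ^ j)) ^ q" by (metis power_Suc2 power_mult)
  then show ?case using Suc K_power_q by simp
qed simp

lemma power_q_power_t: "(x::'a) ^ (q ^ t) = x"
  using power_card_eq_self[of UNIV x] UNIV_card by auto

lemma CHAR_dvd_card_UNIV: "CHAR('a) dvd card (UNIV::'a set)"
proof -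
  have "(\<Sum>y\<in>UNIV. 1 + (y::'a)) = (\<Sum>y\<in>UNIV. y)"
    by (rule sum.reindex_bij_witness[of _ "\<lambda>y. y - 1" "\<lambda>y. 1 + y"]) auto
  then have "of_nat (card (UNIV::'a set)) = (0::'a)" by (simp add: sum.distrib)
  then show ?thesis using of_nat_eq_0_iff_char_dvd by blast
qed

lemma prime_CHAR: "prime CHAR('a)"
  by (intro prime_CHAR_semidom finite_imp_CHAR_pos) simp

lemma q_power_of_CHAR: "\<exists>m. q = CHAR('a) ^ m"
proof -
  obtain p m where p: "prime p" "m > 0" "q = p ^ m" using q_prime_power by blast
  have "CHAR('a) dvd p ^ (m * t)"
    using CHAR_dvd_card_UNIV UNIV_card p by (simp add: power_mult)
  then have "CHAR('a) = p"
    using prime_CHAR p prime_dvd_power primes_dvd_imp_eq by blast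
  then show ?thesis using p by blast
qed

lemma frobenius_add: "((x::'a) + y) ^ (q ^ j) = x ^ (q ^ j) + y ^ (q ^ j)"
proof -
  obtain m where m: "q = CHAR('a) ^ m" using q_power_of_CHAR by blast
  show ?thesis
    by (rule freshmans_dream'[OF prime_CHAR, of _ "m * j"]) (simp add: m power_mult)
qed

lemma frobenius_sum: "(sum (f::_ \<Rightarrow> 'a) I) ^ (q ^ j) = (\<Sum>i\<in>I. f i ^ (q ^ j))"
proof -
  obtain m where m: "q = CHAR('a) ^ m" using q_power_of_CHAR by blast
  show ?thesis
    by (rule freshmans_dream_sum'[OF prime_CHAR, of _ "m * j"]) (simp add: m power_mult)
qed

lemma mem_K_if_power_q_eq: "(y::'a) ^ q = y \<Longrightarrow> y \<in> K"
proof -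
  assume y: "y ^ q = y"
  define P :: "'a poly" where "P = monom 1 q + [:0, -1:]"
  have "degree P = q" using q_ge_2 unfolding P_def
    by (subst degree_add_eq_left) (auto simp: degree_monom_eq)
  moreover from this have "P \<noteq> 0" using q_ge_2 by auto
  ultimately have "card {x. poly P x = 0} \<le> q" using card_poly_roots_bound by metis
  moreover have "{x. poly P x = 0} = {x. x ^ q = x}" by (auto simp: P_def poly_monom)
  moreover have "K \<subseteq> {x. x ^ q = x}" using K_power_q by auto
  ultimately have "K = {x. x ^ q = x}"
    using K_card by (metis card_seteq finite)
  then show ?thesis using y by auto
qed

lemma tr_add: "tr ((x::'a) + y) = tr x + tr y"
  unfolding frob_trace_def by (simp add: frobenius_add sum.distrib)

lemma tr_mult_K: "c \<in> K \<Longrightarrow> tr (c * (x::'a)) = c * tr x"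
  unfolding frob_trace_def by (simp add: power_mult_distrib K_power_q_power sum_distrib_left)

lemma tr_diff: "tr ((x::'a) - y) = tr x - tr y"
  using tr_add[of "x - y" y] by simp

lemma tr_0 [simp]: "tr (0::'a) = 0"
  using tr_diff[of 0 0] by simp

lemma tr_sum: "tr (sum (f::_ \<Rightarrow> 'a) I) = (\<Sum>i\<in>I. tr (f i))"
  by (induction I rule: infinite_finite_induct) (auto simp: tr_add)

lemma tr_K_combination:
  "(\<And>i. i \<in> I \<Longrightarrow> c i \<in> K) \<Longrightarrow> tr (\<Sum>i\<in>I. c i * (f i::'a)) = (\<Sum>i\<in>I. c i * tr (f i))"
  by (simp add: tr_sum tr_mult_K)

lemma tr_K_combination_mult:
  assumes "\<forall>j. c j \<in> K"
  shows "(\<Sum>j<m. c j * tr (a * e j * y)) = tr (a * (\<Sum>j<m. c j * e j) * y)"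
proof -
  have "(\<Sum>j<m. c j * tr (a * e j * y)) = tr (\<Sum>j<m. c j * (a * e j * y))"
    using assms by (simp add: tr_K_combination)
  then show ?thesis by (simp add: sum_distrib_left sum_distrib_right mult_ac)
qed

lemma tr_in_K [simp]: "tr (x::'a) \<in> K"
proof -
  obtain t' where t': "t = Suc t'" using t_pos by (cases t) auto
  have "(tr x) ^ q = (\<Sum>j<t. (x ^ (q ^ j)) ^ q)"
    unfolding frob_trace_def using frobenius_sum[of "\<lambda>j. x ^ (q ^ j)" "{..<t}" 1] by simp
  also have "\<dots> = (\<Sum>j<t. x ^ (q ^ Suc j))"
    by (intro sum.cong refl) (metis power_Suc2 power_mult)
  also have "\<dots> = (\<Sum>j<t'. x ^ (q ^ Suc j)) + x"
    using power_q_power_t by (simp add: t')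
  also have "\<dots> = tr x" unfolding frob_trace_def t' sum.lessThan_Suc_shift by simp
  finally show ?thesis using mem_K_if_power_q_eq by blast
qed

lemma tr_not_identically_0: "\<exists>y::'a. tr y \<noteq> 0"
proof (rule ccontr)
  assume H: "\<nexists>y::'a. tr y \<noteq> 0"
  define T :: "'a poly" where "T = (\<Sum>j<t. monom 1 (q ^ j))"
  have q1: "q > 1" using q_ge_2 by simp
  have "coeff T (q ^ (t - 1)) = (\<Sum>j<t. if j = t - 1 then 1 else 0)"
    unfolding T_def coeff_sum coeff_monom using q1 by (intro sum.cong) auto
  then have "T \<noteq> 0" using t_pos by auto
  then have "card {x. poly T x = 0} \<le> degree T" by (rule card_poly_roots_bound)
  moreover have "{x. poly T x = 0} = UNIV"
    using H unfolding T_def frob_trace_def by (auto simp: poly_sum poly_monom)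
  moreover have "degree T \<le> q ^ (t - 1)" unfolding T_def
    by (intro degree_sum_le)
      (use q1 in \<open>auto intro!: order.trans[OF degree_monom_le] power_increasing simp: Suc_leI\<close>)
  ultimately have "q ^ t \<le> q ^ (t - 1)" using UNIV_card by simp
  then show False using q1 t_pos power_le_imp_le_exp by fastforce
qed

lemma tr_nondegenerate:
  assumes "\<And>y::'a. tr (y * z) = 0"
  shows "z = 0"
proof (rule ccontr)
  assume "z \<noteq> 0"
  moreover obtain y :: 'a where "tr y \<noteq> 0" using tr_not_identically_0 by blast
  ultimately show False using assms[of "y / z"] by simp
qed

section \<open>Spans and linear maps over the subfield\<close>

lemma k_subspace_span: "k_subspace K (k_span K S)"
  unfolding k_subspace_def k_span_def
proof (intro conjI ballI)
  show "0 \<in> {y. \<exists>c. (\<forall>v\<in>S. c v \<in> K) \<and> y = (\<Sum>v\<in>S. c v * v)}"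
    by (intro CollectI exI[of _ "\<lambda>_. 0"]) auto
next
  fix x y assume "x \<in> {y. \<exists>c. (\<forall>v\<in>S. c v \<in> K) \<and> y = (\<Sum>v\<in>S. c v * v)}"
    "y \<in> {y. \<exists>c. (\<forall>v\<in>S. c v \<in> K) \<and> y = (\<Sum>v\<in>S. c v * v)}"
  then obtain c d where "\<forall>v\<in>S. c v \<in> K" "x = (\<Sum>v\<in>S. c v * v)" "\<forall>v\<in>S. d v \<in> K" "y = (\<Sum>v\<in>S. d v * v)"
    by blast
  then show "x + y \<in> {y. \<exists>c. (\<forall>v\<in>S. c v \<in> K) \<and> y = (\<Sum>v\<in>S. c v * v)}"
    by (intro CollectI exI[of _ "\<lambda>v. c v + d v"]) (auto simp: sum.distrib distrib_right)
next
  fix a x assume a: "a \<in> K" and "x \<in> {y. \<exists>c. (\<forall>v\<in>S. c v \<in> K) \<and> y = (\<Sum>v\<in>S. c v * v)}"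
  then obtain c where "\<forall>v\<in>S. c v \<in> K" "x = (\<Sum>v\<in>S. c v * v)" by blast
  then show "a * x \<in> {y. \<exists>c. (\<forall>v\<in>S. c v \<in> K) \<and> y = (\<Sum>v\<in>S. c v * v)}"
    using a by (intro CollectI exI[of _ "\<lambda>v. a * c v"]) (auto simp: sum_distrib_left mult.assoc)
qed

lemma k_subspace_sum:
  assumes V: "k_subspace K V"
  shows "(\<And>b. b \<in> B \<Longrightarrow> f b \<in> V) \<Longrightarrow> (\<And>b. b \<in> B \<Longrightarrow> c b \<in> K) \<Longrightarrow> (\<Sum>b\<in>B. c b * f b) \<in> V"
proof (induction B rule: infinite_finite_induct)
  case (infinite A) then show ?case using V by (simp add: k_subspace_def)
next
  case empty then show ?case using V by (simp add: k_subspace_def)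
next
  case (insert x F)
  then show ?case using V unfolding k_subspace_def by simp
qed

lemma k_span_superset: "finite S \<Longrightarrow> S \<subseteq> k_span K S"
proof
  fix v assume fin: "finite S" and v: "v \<in> S"
  have "(\<Sum>w\<in>S. (if w = v then 1 else 0) * w) = (\<Sum>w\<in>S. if w = v then w else 0)"
    by (rule sum.cong) auto
  also have "\<dots> = v" using fin v by (simp add: sum.delta')
  finally show "v \<in> k_span K S" unfolding k_span_def
    by (intro CollectI exI[of _ "\<lambda>w. if w = v then 1 else 0"]) auto
qed

lemma k_span_least: "finite S \<Longrightarrow> k_subspace K V \<Longrightarrow> S \<subseteq> V \<Longrightarrow> k_span K S \<subseteq> V"
proof
  fix y assume "finite S" "k_subspace K V" "S \<subseteq> V" "y \<in> k_span K S"
  then obtain c where "\<forall>v\<in>S. c v \<in> K" "y = (\<Sum>v\<in>S. c v * v)" unfolding k_span_def by blast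
  then show "y \<in> V" using k_subspace_sum[OF \<open>k_subspace K V\<close>, of S id c] \<open>S \<subseteq> V\<close> by auto
qed

lemma k_span_subspace_eq:
  assumes "k_subspace K W" shows "k_span K W = W"
proof
  have fW: "finite W" by simp
  show "k_span K W \<subseteq> W" by (rule k_span_least[OF fW assms subset_refl])
  show "W \<subseteq> k_span K W" by (rule k_span_superset[OF fW])
qed

lemma mem_k_span_if_dependent_insert:
  assumes T: "k_indep K T" and dep: "\<not> k_indep K (insert v T)" and "v \<notin> T"
  shows "v \<in> k_span K T"
proof -
  have finT: "finite T" using T unfolding k_indep_def by simp
  obtain c where c: "\<forall>w\<in>insert v T. c w \<in> K" "(\<Sum>w\<in>insert v T. c w * w) = 0"
    "\<exists>w\<in>insert v T. c w \<noteq> 0"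
    using dep finT unfolding k_indep_def by blast
  have sum_eq: "c v * v = - (\<Sum>w\<in>T. c w * w)"
    using c(2) \<open>v \<notin> T\<close> finT by (simp add: eq_neg_iff_add_eq_0)
  have "c v \<noteq> 0"
  proof
    assume "c v = 0"
    then have "\<forall>w\<in>T. c w = 0" using sum_eq T c(1) unfolding k_indep_def by auto
    then show False using c(3) \<open>c v = 0\<close> by auto
  qed
  then have "v = (\<Sum>w\<in>T. (- c w / c v) * w)"
    using sum_eq by (simp add: sum_divide_distrib[symmetric] sum_negf field_simps)
  then show ?thesis unfolding k_span_def using c(1)
    by (intro CollectI exI[of _ "\<lambda>w. - c w / c v"]) (auto simp: K_uminus K_divide)
qed

lemma maximal_k_indep_subset:
  assumes fin: "finite S"
  shows "\<exists>T\<subseteq>S. k_indep K T \<and> card T = k_rank K S \<and> k_span K T = k_span K S"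
proof -
  define C where "C = {card T | T. T \<subseteq> S \<and> k_indep K T}"
  have Cfin: "finite C" unfolding C_def by simp
  have "card {} \<in> C" unfolding C_def k_indep_def by auto
  then have "Max C \<in> C" using Cfin by (intro Max_in) auto
  then obtain T where T: "T \<subseteq> S" "k_indep K T" "card T = Max C" unfolding C_def by auto
  have finT: "finite T" using T fin finite_subset by blast
  have "S \<subseteq> k_span K T"
  proof
    fix v assume "v \<in> S"
    show "v \<in> k_span K T"
    proof (cases "v \<in> T")
      case True then show ?thesis using k_span_superset[OF finT] by auto
    next
      case False
      have "\<not> k_indep K (insert v T)"
      proof
        assume "k_indep K (insert v T)"
        then have "card (insert v T) \<in> C" using \<open>v \<in> S\<close> T unfolding C_def by blast
        then have "card (insert v T) \<le> Max C" using Cfin by simp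
        then show False using False finT T by simp
      qed
      then show ?thesis using mem_k_span_if_dependent_insert[OF T(2)] False by blast
    qed
  qed
  then have "k_span K S \<subseteq> k_span K T" using k_span_least[OF fin k_subspace_span] by blast
  moreover have "k_span K T \<subseteq> k_span K S"
    using k_span_least[OF finT k_subspace_span] k_span_superset[OF fin] T(1) by blast
  ultimately have "k_span K T = k_span K S" by (rule equalityI[rotated])
  moreover have "card T = k_rank K S" using T(3) unfolding k_rank_def C_def by simp
  ultimately show ?thesis using T(1,2) by blast
qed

lemma card_k_span_indep:
  assumes ind: "k_indep K T"
  shows "card (k_span K T) = q ^ card T"
proof -
  have finT: "finite T" using ind unfolding k_indep_def by simp
  define \<phi> where "\<phi> c = (\<Sum>v\<in>T. c v * v)" for c
  have "bij_betw \<phi> (PiE T (\<lambda>_. K)) (k_span K T)"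
    unfolding bij_betw_def
  proof
    show "inj_on \<phi> (PiE T (\<lambda>_. K))"
    proof (rule inj_onI)
      fix c d assume c: "c \<in> PiE T (\<lambda>_. K)" and d: "d \<in> PiE T (\<lambda>_. K)" and e: "\<phi> c = \<phi> d"
      have "(\<Sum>v\<in>T. (c v - d v) * v) = 0" using e unfolding \<phi>_def
        by (simp add: left_diff_distrib sum_subtractf)
      moreover have "\<forall>v\<in>T. c v - d v \<in> K" using c d by (simp add: PiE_iff)
      ultimately have "\<forall>v\<in>T. c v - d v = 0"
        using ind[unfolded k_indep_def, THEN conjunct2, THEN spec, of "\<lambda>v. c v - d v"] by simp
      then show "c = d" using c d by (intro PiE_ext) auto
    qed
    show "\<phi> ` PiE T (\<lambda>_. K) = k_span K T"
    proof
      show "\<phi> ` PiE T (\<lambda>_. K) \<subseteq> k_span K T" unfolding \<phi>_def k_span_def by (auto simp: PiE_iff)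
      show "k_span K T \<subseteq> \<phi> ` PiE T (\<lambda>_. K)"
      proof
        fix y assume "y \<in> k_span K T"
        then obtain c where c: "\<forall>v\<in>T. c v \<in> K" "y = (\<Sum>v\<in>T. c v * v)" unfolding k_span_def by blast
        have "\<phi> (restrict c T) = y" unfolding \<phi>_def c(2) by (intro sum.cong) auto
        moreover have "restrict c T \<in> PiE T (\<lambda>_. K)" using c(1) by auto
        ultimately show "y \<in> \<phi> ` PiE T (\<lambda>_. K)" by blast
      qed
    qed
  qed
  then have "card (k_span K T) = card (PiE T (\<lambda>_. K))" by (metis bij_betw_same_card)
  also have "\<dots> = q ^ card T" using finT by (simp add: card_PiE K_card)
  finally show ?thesis .
qed

lemma card_k_span: "finite S \<Longrightarrow> card (k_span K S) = q ^ k_rank K S"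
  using maximal_k_indep_subset[of S] card_k_span_indep by metis

lemma k_linear_0: "k_linear K L \<Longrightarrow> L 0 = 0"
  unfolding k_linear_def by (metis add_cancel_right_right add_0)

lemma k_linear_sum: "k_linear K L \<Longrightarrow> (\<And>i. i \<in> I \<Longrightarrow> c i \<in> K) \<Longrightarrow> L (\<Sum>i\<in>I. c i * f i) = (\<Sum>i\<in>I. c i * L (f i))"
proof (induction I rule: infinite_finite_induct)
  case (infinite A) then show ?case using k_linear_0 by simp
next
  case empty then show ?case using k_linear_0 by simp
next
  case (insert x F) then show ?case unfolding k_linear_def by simp
qed

lemma k_subspace_range: "k_linear K L \<Longrightarrow> k_subspace K (range L)"
  unfolding k_subspace_def
proof (intro conjI ballI)
  assume L: "k_linear K L"
  show "0 \<in> range L" using k_linear_0[OF L] by (metis rangeI)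
  fix x y assume "x \<in> range L" "y \<in> range L"
  then obtain a b where "x = L a" "y = L b" by auto
  then have "x + y = L (a + b)" using L unfolding k_linear_def by simp
  then show "x + y \<in> range L" by simp
next
  fix c x assume L: "k_linear K L" and c: "c \<in> K" and "x \<in> range L"
  then obtain a where "x = L a" by auto
  then have "c * x = L (c * a)" using L c unfolding k_linear_def by simp
  then show "c * x \<in> range L" by simp
qed

lemma k_span_image_basis:
  assumes L: "k_linear K L" and fin: "finite B" and sp: "k_span K B = UNIV"
  shows "k_span K (L ` B) = range L"
proof
  show "k_span K (L ` B) \<subseteq> range L" using k_span_least[OF finite_imageI[OF fin] k_subspace_range[OF L]] by auto
  show "range L \<subseteq> k_span K (L ` B)"
  proof
    fix y assume "y \<in> range L"
    then obtain x where x: "y = L x" by auto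
    have "x \<in> k_span K B" using sp by simp
    then obtain c where c: "\<forall>v\<in>B. c v \<in> K" "x = (\<Sum>v\<in>B. c v * v)" unfolding k_span_def by blast
    have "y = (\<Sum>v\<in>B. c v * L v)" using x c k_linear_sum[OF L, of B c id] by simp
    also have "\<dots> \<in> k_span K (L ` B)"
      using k_subspace_sum[OF k_subspace_span, where B=B and f=L and c=c] k_span_superset[of "L ` B"] fin c by auto
    finally show "y \<in> k_span K (L ` B)" .
  qed
qed

lemma k_linear_diff: "k_linear K L \<Longrightarrow> L (x - y) = L x - L y"
  unfolding k_linear_def by (metis add_diff_cancel diff_add_cancel)

lemma k_linear_mult_left: "k_linear K L \<Longrightarrow> k_linear K (\<lambda>x. C * L x)"
  unfolding k_linear_def by (simp add: distrib_left mult.left_commute)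

lemma k_linear_frobenius: "k_linear K (\<lambda>x::'a. x ^ (q ^ s))"
  unfolding k_linear_def by (simp add: frobenius_add power_mult_distrib K_power_q_power)

lemma inj_frobenius: "inj (\<lambda>x::'a. x ^ (q ^ s))"
proof (rule injI)
  fix x y :: 'a assume "x ^ (q ^ s) = y ^ (q ^ s)"
  then have "(x - y) ^ (q ^ s) = 0" using k_linear_diff[OF k_linear_frobenius, of x y] by simp
  then show "x = y" by simp
qed

lemma k_subspace_uminus: "k_subspace K U \<Longrightarrow> u \<in> U \<Longrightarrow> - u \<in> U"
  unfolding k_subspace_def using K_uminus[OF K_1] by (metis mult_minus1)

lemma k_subspace_diff: "k_subspace K U \<Longrightarrow> u \<in> U \<Longrightarrow> x \<in> U \<Longrightarrow> u - x \<in> U"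
  using k_subspace_uminus[of U x] unfolding k_subspace_def by (metis diff_conv_add_uminus)

lemma k_linear_subspace_polynomial:
  assumes U: "k_subspace K U" and pw: "\<And>c. c \<in> K \<Longrightarrow> c ^ card U = c"
  shows "k_linear K (\<lambda>x::'a. \<Prod>u\<in>U. (x - u))"
proof -
  have U0: "0 \<in> U" using U unfolding k_subspace_def by simp
  have add: "(\<Prod>u\<in>U. (x + y - u)) = (\<Prod>u\<in>U. (x - u)) + (\<Prod>u\<in>U. (y - u))" for x y
    using U U0 k_subspace_diff[OF U] unfolding k_subspace_def
    by (intro prod_translate_subgroup_add) auto
  have hom: "(\<Prod>u\<in>U. (c * x - u)) = c * (\<Prod>u\<in>U. (x - u))" if c: "c \<in> K" for c x
  proof (cases "c = 0")
    case True
    then show ?thesis using U0 by (simp add: prod_zero_iff)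
  next
    case False
    have "(\<Prod>u\<in>U. (c * x - u)) = (\<Prod>u\<in>U. c * (x - u / c))"
      using False by (intro prod.cong) (auto simp: field_simps)
    also have "\<dots> = c ^ card U * (\<Prod>u\<in>U. (x - u / c))" by (simp add: prod.distrib)
    also have "(\<Prod>u\<in>U. (x - u / c)) = (\<Prod>u\<in>U. (x - u))"
    proof (rule prod.reindex_bij_witness[of _ "\<lambda>u. c * u" "\<lambda>u. u / c"])
      show "c * u \<in> U" if "u \<in> U" for u using U c that unfolding k_subspace_def by blast
      show "u / c \<in> U" if "u \<in> U" for u
        using U K_inverse[OF c] that unfolding k_subspace_def by (auto simp: divide_inverse mult.commute)
    qed (use False in auto)
    finally show ?thesis using pw[OF c] by simp
  qed
  show ?thesis unfolding k_linear_def using add hom by auto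
qed

lemma k_linear_functional_imp_k_linear: "k_linear_functional K \<mu> \<Longrightarrow> k_linear K \<mu>"
  unfolding k_linear_functional_def k_linear_def by simp

lemma ex_k_basis: obtains B where "k_indep K B" and "k_span K B = UNIV"
proof -
  obtain B where "k_indep K B" "k_span K B = k_span K UNIV"
    using maximal_k_indep_subset[of UNIV] by auto
  moreover have "k_span K UNIV = UNIV" using k_span_superset[of UNIV] by auto
  ultimately show ?thesis using that by simp
qed

lemma finite_k_linear_functionals:
  "finite {\<mu>. k_linear_functional K \<mu>} \<and> card {\<mu>. k_linear_functional K \<mu>} \<le> q ^ t"
proof -
  obtain B where B: "k_indep K B" "k_span K B = UNIV" by (rule ex_k_basis)
  define LF where "LF = {\<mu>::'a \<Rightarrow> 'a. k_linear_functional K \<mu>}"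
  have finB: "finite B" using B(1) unfolding k_indep_def by simp
  have "card B = t"
    using card_k_span_indep[OF B(1)] B(2) UNIV_card q_ge_2 by (simp add: power_inject_exp)
  have inj: "inj_on (\<lambda>\<mu>. restrict \<mu> B) LF"
  proof (rule inj_onI)
    fix \<mu>1 \<mu>2 assume \<mu>: "\<mu>1 \<in> LF" "\<mu>2 \<in> LF" and eq: "restrict \<mu>1 B = restrict \<mu>2 B"
    show "\<mu>1 = \<mu>2"
    proof
      fix y :: 'a
      obtain c where c: "\<forall>v\<in>B. c v \<in> K" "y = (\<Sum>v\<in>B. c v * v)"
        using B(2) unfolding k_span_def by blast
      have lin: "k_linear K \<mu>1" "k_linear K \<mu>2"
        using \<mu> k_linear_functional_imp_k_linear unfolding LF_def by auto
      have "\<mu>1 v = \<mu>2 v" if "v \<in> B" for v using fun_cong[OF eq, of v] that by simp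
      then show "\<mu>1 y = \<mu>2 y"
        using c k_linear_sum[OF lin(1), of B c id] k_linear_sum[OF lin(2), of B c id] by simp
    qed
  qed
  have image: "(\<lambda>\<mu>. restrict \<mu> B) ` LF \<subseteq> B \<rightarrow>\<^sub>E K"
    unfolding LF_def k_linear_functional_def by auto
  have fin: "finite (B \<rightarrow>\<^sub>E K)" using finB by (intro finite_PiE) auto
  have "card LF \<le> card (B \<rightarrow>\<^sub>E K)"
    using card_mono[OF fin image] card_image[OF inj] by simp
  then show ?thesis
    using finite_imageD[OF finite_subset[OF image fin] inj] finB \<open>card B = t\<close>
    unfolding LF_def by (simp add: card_PiE K_card)
qed

lemma k_linear_functional_trace_form:
  assumes "k_linear_functional K \<mu>"
  obtains m where "\<And>y. \<mu> y = tr (m * y)"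
proof -
  define \<Psi> where "\<Psi> m = (\<lambda>y. tr (m * y))" for m :: 'a
  have "\<Psi> m \<in> {\<mu>. k_linear_functional K \<mu>}" for m
    unfolding \<Psi>_def k_linear_functional_def
    by (simp add: distrib_left tr_add tr_mult_K mult.left_commute)
  moreover have "inj \<Psi>"
  proof (rule injI)
    fix m1 m2 assume "\<Psi> m1 = \<Psi> m2"
    then have "tr (y * (m1 - m2)) = 0" for y
      using fun_cong[of "\<Psi> m1" "\<Psi> m2" y] unfolding \<Psi>_def
      by (simp add: right_diff_distrib tr_diff mult.commute)
    then show "m1 = m2" using tr_nondegenerate[of "m1 - m2"] by simp
  qed
  ultimately have "range \<Psi> = {\<mu>. k_linear_functional K \<mu>}"
    using finite_k_linear_functionals card_image[of \<Psi> UNIV] UNIV_card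
    by (metis card_seteq image_subsetI)
  then show ?thesis using assms that unfolding \<Psi>_def by (metis (no_types, lifting) mem_Collect_eq rangeE)
qed

lemma eq_0_if_tr_span_0:
  assumes sp: "k_span K (u ` {1..t}) = UNIV" and z: "\<And>i. i \<in> {1..t} \<Longrightarrow> tr (u i * d) = 0"
  shows "d = (0::'a)"
proof (rule tr_nondegenerate)
  fix y :: 'a
  have "y \<in> k_span K (u ` {1..t})" using sp by simp
  then obtain c where c: "\<forall>v\<in>u ` {1..t}. c v \<in> K" "y = (\<Sum>v\<in>u ` {1..t}. c v * v)"
    unfolding k_span_def by blast
  have "tr (y * d) = tr (\<Sum>v\<in>u ` {1..t}. c v * (v * d))"
    using c(2) by (simp add: sum_distrib_right mult.assoc)
  also have "\<dots> = (\<Sum>v\<in>u ` {1..t}. c v * tr (v * d))"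
    using c(1) by (intro tr_K_combination) auto
  also have "\<dots> = 0" using z by (intro sum.neutral) auto
  finally show "tr (y * d) = 0" .
qed

lemma bij_tr_coordinates:
  assumes sp: "k_span K (u ` {1..t}) = UNIV"
  shows "bij_betw (\<lambda>z. restrict (\<lambda>i. tr (u i * z)) {1..t}) UNIV ({1..t} \<rightarrow>\<^sub>E K)"
proof -
  define \<Phi> where "\<Phi> z = restrict (\<lambda>i. tr (u i * z)) {1..t}" for z :: 'a
  have "inj \<Phi>"
  proof (rule injI)
    fix z1 z2 assume e: "\<Phi> z1 = \<Phi> z2"
    have "z1 - z2 = 0"
    proof (rule eq_0_if_tr_span_0[OF sp])
      fix i assume i: "i \<in> {1..t}"
      have "tr (u i * z1) = tr (u i * z2)" using fun_cong[OF e, of i] i unfolding \<Phi>_def by simp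
      then show "tr (u i * (z1 - z2)) = 0" by (simp add: right_diff_distrib tr_diff)
    qed
    then show "z1 = z2" by simp
  qed
  moreover have "range \<Phi> = {1..t} \<rightarrow>\<^sub>E K"
  proof (rule card_subset_eq)
    show "range \<Phi> \<subseteq> {1..t} \<rightarrow>\<^sub>E K" unfolding \<Phi>_def by auto
    show "card (range \<Phi>) = card ({1..t} \<rightarrow>\<^sub>E K)"
      using card_image[OF \<open>inj \<Phi>\<close>] UNIV_card by (simp add: card_PiE K_card)
  qed (auto intro: finite_PiE)
  ultimately show ?thesis unfolding \<Phi>_def bij_betw_def by simp
qed

lemma tr_dual_basis:
  assumes sp: "k_span K (u ` {1..t}) = UNIV"
  obtains \<nu> where "\<And>z. z = (\<Sum>i\<in>{1..t}. tr (u i * z) * \<nu> i)"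
proof -
  define \<Phi> where "\<Phi> z = restrict (\<lambda>i. tr (u i * z)) {1..t}" for z :: 'a
  have bij: "bij_betw \<Phi> UNIV ({1..t} \<rightarrow>\<^sub>E K)" unfolding \<Phi>_def by (rule bij_tr_coordinates[OF sp])
  define \<nu> where "\<nu> i = inv \<Phi> (restrict (\<lambda>j. if j = i then 1 else 0) {1..t})" for i
  have \<Phi>_\<nu>: "\<Phi> (\<nu> i) = restrict (\<lambda>j. if j = i then 1 else 0) {1..t}" for i
    using bij unfolding \<nu>_def by (intro f_inv_into_f) (auto simp: bij_betw_def)
  have tr_\<nu>: "tr (u j * \<nu> i) = (if j = i then 1 else 0)" if "j \<in> {1..t}" for i j
    using fun_cong[OF \<Phi>_\<nu>[of i], of j] that unfolding \<Phi>_def by simp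
  have "\<Phi> (\<Sum>i\<in>{1..t}. tr (u i * z) * \<nu> i) = \<Phi> z" for z
  proof
    fix j
    show "\<Phi> (\<Sum>i\<in>{1..t}. tr (u i * z) * \<nu> i) j = \<Phi> z j"
    proof (cases "j \<in> {1..t}")
      case True
      have "tr (u j * (\<Sum>i\<in>{1..t}. tr (u i * z) * \<nu> i))
          = tr (\<Sum>i\<in>{1..t}. tr (u i * z) * (u j * \<nu> i))"
        by (simp add: sum_distrib_left mult.left_commute)
      also have "\<dots> = (\<Sum>i\<in>{1..t}. tr (u i * z) * tr (u j * \<nu> i))"
        by (intro tr_K_combination) simp
      also have "\<dots> = (\<Sum>i\<in>{1..t}. if i = j then tr (u i * z) else 0)"
        using True tr_\<nu> by (intro sum.cong) auto
      also have "\<dots> = tr (u j * z)" using True by simp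
      finally show ?thesis unfolding \<Phi>_def using True by simp
    qed (auto simp: \<Phi>_def)
  qed
  moreover have "inj \<Phi>" using bij by (simp add: bij_betw_def)
  ultimately have "(\<Sum>i\<in>{1..t}. tr (u i * z) * \<nu> i) = z" for z by (simp add: inj_eq)
  then show ?thesis by (intro that[of \<nu>]) simp
qed

lemma k_span_coordinates:
  assumes fin: "finite S"
  shows "\<exists>e c. \<forall>v\<in>S. (\<forall>j. c v j \<in> K) \<and> v = (\<Sum>j<k_rank K S. c v j * e j)"
proof -
  obtain T where T: "T \<subseteq> S" "k_indep K T" "card T = k_rank K S" "k_span K T = k_span K S"
    using maximal_k_indep_subset[OF fin] by blast
  have finT: "finite T" using T(1) fin finite_subset by blast
  obtain h where h: "bij_betw h {0..<card T} T" using ex_bij_betw_nat_finite[OF finT] by blast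
  have "\<forall>v\<in>S. \<exists>cv. (\<forall>j. cv j \<in> K) \<and> v = (\<Sum>j<k_rank K S. cv j * h j)"
  proof
    fix v assume v: "v \<in> S"
    then have "v \<in> k_span K T" using T(4) k_span_superset[OF fin] by auto
    then obtain c where c: "\<forall>w\<in>T. c w \<in> K" "v = (\<Sum>w\<in>T. c w * w)" unfolding k_span_def by blast
    have "v = (\<Sum>j\<in>{0..<card T}. c (h j) * h j)"
      using c(2) sum.reindex_bij_betw[OF h, of "\<lambda>w. c w * w"] by simp
    also have "\<dots> = (\<Sum>j<k_rank K S. (if j < card T then c (h j) else 0) * h j)"
      using T(3) by (intro sum.cong) auto
    finally have "v = (\<Sum>j<k_rank K S. (if j < card T then c (h j) else 0) * h j)" .
    moreover have "\<forall>j. (if j < card T then c (h j) else 0) \<in> K"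
      using c(1) h unfolding bij_betw_def by auto
    ultimately show "\<exists>cv. (\<forall>j. cv j \<in> K) \<and> v = (\<Sum>j<k_rank K S. cv j * h j)" by (intro exI[of _ "\<lambda>j. if j < card T then c (h j) else 0"]) simp
  qed
  from bchoice[OF this] obtain c where "\<forall>v\<in>S. (\<forall>j. c v j \<in> K) \<and> v = (\<Sum>j<k_rank K S. c v j * h j)"
    by blast
  then show ?thesis by blast
qed

section \<open>Lower bound for linear repair schemes\<close>

lemma card_tr_kernel_ge: "q ^ t \<le> q ^ m * card {c::'a. \<forall>j<m. tr (c * r j) = 0}"
proof -
  define \<phi> where "\<phi> c = (\<lambda>j. if j < m then tr (c * r j) else 0)" for c :: 'a
  define pad where "pad x = (\<lambda>j. if j < m then x j else (0::'a))" for x :: "nat \<Rightarrow> 'a"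
  have "\<phi> x = \<phi> y \<longleftrightarrow> \<phi> (x - y) = \<phi> 0" for x y
    unfolding \<phi>_def by (auto simp: fun_eq_iff left_diff_distrib tr_diff)
  then have count: "card (range \<phi>) * card {c. \<phi> c = \<phi> 0} = q ^ t"
    using card_range_mult_card_kernel UNIV_card by metis
  have "range \<phi> \<subseteq> pad ` ({..<m} \<rightarrow>\<^sub>E K)"
  proof
    fix y assume "y \<in> range \<phi>"
    then obtain c where "y = \<phi> c" by auto
    then have "y = pad (restrict (\<lambda>j. tr (c * r j)) {..<m})"
      unfolding \<phi>_def pad_def by (auto simp: fun_eq_iff)
    then show "y \<in> pad ` ({..<m} \<rightarrow>\<^sub>E K)" by auto
  qed
  then have "card (range \<phi>) \<le> card (pad ` ({..<m} \<rightarrow>\<^sub>E K))"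
    by (intro card_mono finite_imageI finite_PiE) auto
  also have "\<dots> \<le> card ({..<m} \<rightarrow>\<^sub>E K)"
    by (intro card_image_le finite_PiE) auto
  also have "\<dots> = q ^ m" by (simp add: card_PiE K_card)
  finally have "q ^ t \<le> q ^ m * card {c. \<phi> c = \<phi> 0}" using count by (metis mult_le_mono1)
  moreover have "{c. \<phi> c = \<phi> 0} = {c. \<forall>j<m. tr (c * r j) = 0}"
    unfolding \<phi>_def by (auto simp: fun_eq_iff)
  ultimately show ?thesis by simp
qed

lemma linear_map_on_arrays_expansion:
  fixes R :: "('b \<Rightarrow> nat \<Rightarrow> 'a) \<Rightarrow> 'a"
  assumes R_lin: "\<And>x y c. (\<forall>\<alpha> j. x \<alpha> j \<in> K) \<Longrightarrow> (\<forall>\<alpha> j. y \<alpha> j \<in> K) \<Longrightarrow> c \<in> K \<Longrightarrow>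
        R (\<lambda>\<alpha> j. c * x \<alpha> j + y \<alpha> j) = c * R x + R y"
    and "finite J" and x_K: "\<forall>\<alpha> j. x \<alpha> j \<in> K"
  shows "R (\<lambda>\<alpha> j. if (\<alpha>, j) \<in> J then x \<alpha> j else 0)
       = (\<Sum>p\<in>J. x (fst p) (snd p) * R (\<lambda>\<alpha> j. if (\<alpha>, j) = p then 1 else 0))"
  using \<open>finite J\<close>
proof (induction J rule: finite_induct)
  case empty
  have "R (\<lambda>\<alpha> j. 0) = R (\<lambda>\<alpha> j. 0) + R (\<lambda>\<alpha> j. 0)"
    using R_lin[of "\<lambda>\<alpha> j. 0" "\<lambda>\<alpha> j. 0" 1] by simp
  then have "R (\<lambda>\<alpha> j. 0) = 0" by (metis add_cancel_right_right)
  then show ?case by simp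
next
  case (insert p J)
  have "(\<lambda>\<alpha> j. if (\<alpha>, j) \<in> insert p J then x \<alpha> j else 0)
      = (\<lambda>\<alpha> j. x (fst p) (snd p) * (if (\<alpha>, j) = p then 1 else 0) + (if (\<alpha>, j) \<in> J then x \<alpha> j else 0))"
    using insert(2) by (cases p) (auto simp: fun_eq_iff)
  moreover have "R (\<lambda>\<alpha> j. x (fst p) (snd p) * (if (\<alpha>, j) = p then 1 else 0) + (if (\<alpha>, j) \<in> J then x \<alpha> j else 0))
      = x (fst p) (snd p) * R (\<lambda>\<alpha> j. if (\<alpha>, j) = p then 1 else 0) + R (\<lambda>\<alpha> j. if (\<alpha>, j) \<in> J then x \<alpha> j else 0)"
    using R_lin[of "\<lambda>\<alpha> j. if (\<alpha>, j) = p then 1 else 0" "\<lambda>\<alpha> j. if (\<alpha>, j) \<in> J then x \<alpha> j else 0"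
        "x (fst p) (snd p)"] x_K by simp
  ultimately show ?case using insert by simp
qed

lemma recovered_symbol_expansion:
  assumes lf: "\<And>\<alpha> j. k_linear_functional K (\<mu> \<alpha> j)"
    and R_lin: "\<And>x y c. (\<forall>\<alpha> j. x \<alpha> j \<in> K) \<Longrightarrow> (\<forall>\<alpha> j. y \<alpha> j \<in> K) \<Longrightarrow> c \<in> K \<Longrightarrow>
        R (\<lambda>\<alpha> j. c * x \<alpha> j + y \<alpha> j) = c * R x + R y"
    and recover: "R (download A astar b \<mu> f) = poly f astar"
  shows "poly f astar = (\<Sum>p\<in>Sigma (A - {astar}) (\<lambda>\<alpha>. {..<b \<alpha>}).
    \<mu> (fst p) (snd p) (poly f (fst p)) * R (\<lambda>\<alpha> j. if (\<alpha>, j) = p then 1 else 0))"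
proof -
  define I where "I = Sigma (A - {astar}) (\<lambda>\<alpha>. {..<b \<alpha>})"
  have d_K: "\<forall>\<alpha> j. download A astar b \<mu> f \<alpha> j \<in> K"
    using lf unfolding download_def k_linear_functional_def by simp
  have "download A astar b \<mu> f = (\<lambda>\<alpha> j. if (\<alpha>, j) \<in> I then download A astar b \<mu> f \<alpha> j else 0)"
    unfolding I_def download_def by (intro ext) simp
  then have "poly f astar = R (\<lambda>\<alpha> j. if (\<alpha>, j) \<in> I then download A astar b \<mu> f \<alpha> j else 0)"
    using recover by metis
  also have "\<dots> = (\<Sum>p\<in>I. download A astar b \<mu> f (fst p) (snd p) * R (\<lambda>\<alpha> j. if (\<alpha>, j) = p then 1 else 0))"
    by (rule linear_map_on_arrays_expansion[where R = R, OF R_lin _ d_K])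
       (auto simp: I_def intro: finite_SigmaI)
  also have "\<dots> = (\<Sum>p\<in>I. \<mu> (fst p) (snd p) (poly f (fst p)) * R (\<lambda>\<alpha> j. if (\<alpha>, j) = p then 1 else 0))"
  proof (rule sum.cong[OF refl])
    fix p assume "p \<in> I"
    then show "download A astar b \<mu> f (fst p) (snd p) * R (\<lambda>\<alpha> j. if (\<alpha>, j) = p then 1 else 0)
        = \<mu> (fst p) (snd p) (poly f (fst p)) * R (\<lambda>\<alpha> j. if (\<alpha>, j) = p then 1 else 0)"
      unfolding I_def download_def by (cases p) auto
  qed
  finally show ?thesis unfolding I_def .
qed

lemma relation_if_tr_relation:
  fixes c a :: 'a
  assumes tr_relation: "\<And>f. rs_msg k f \<Longrightarrow> tr (c * poly f a) = tr (\<Sum>\<alpha>\<in>B. v \<alpha> * poly f \<alpha>)"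
    and "rs_msg k f"
  shows "c * poly f a = (\<Sum>\<alpha>\<in>B. v \<alpha> * poly f \<alpha>)"
proof -
  have smult: "rs_msg k (smult e f)" for e
    using assms(2) unfolding rs_msg_def by (auto intro: le_less_trans[OF degree_smult_le])
  have "tr (e * (c * poly f a)) = tr (e * (\<Sum>\<alpha>\<in>B. v \<alpha> * poly f \<alpha>))" for e
  proof -
    have "tr (c * poly (smult e f) a) = tr (\<Sum>\<alpha>\<in>B. v \<alpha> * poly (smult e f) \<alpha>)"
      by (rule tr_relation[OF smult])
    then show ?thesis by (simp add: sum_distrib_left mult.left_commute)
  qed
  then have "tr (e * (c * poly f a - (\<Sum>\<alpha>\<in>B. v \<alpha> * poly f \<alpha>))) = 0" for e
    by (simp add: right_diff_distrib tr_diff)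
  then have "c * poly f a - (\<Sum>\<alpha>\<in>B. v \<alpha> * poly f \<alpha>) = 0" by (rule tr_nondegenerate)
  then show ?thesis by simp
qed

text \<open>The weights are v c a = sum_j tr(c r(a, j)) M(a, j), where tr(M(a, j) y) is the j-th
  sub-symbol sent by node a and r(a, j) is the recovery map applied to the j-th unit download of
  node a; so v c a vanishes as soon as these b_a traces do.\<close>

lemma linear_repair_scheme_dual_relations:
  assumes "linear_repair_scheme K A k astar b"
  obtains v where "\<And>c f. rs_msg k f \<Longrightarrow> c * poly f astar = (\<Sum>\<alpha>\<in>A - {astar}. v c \<alpha> * poly f \<alpha>)"
    and "\<And>\<alpha>. v 0 \<alpha> = 0" and "\<And>\<alpha>. q ^ t \<le> q ^ b \<alpha> * card {c. v c \<alpha> = 0}"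
proof -
  obtain \<mu> R where lf: "\<And>\<alpha> j. k_linear_functional K (\<mu> \<alpha> j)"
    and R_lin: "\<And>x y c. (\<forall>\<alpha> j. x \<alpha> j \<in> K) \<Longrightarrow> (\<forall>\<alpha> j. y \<alpha> j \<in> K) \<Longrightarrow> c \<in> K \<Longrightarrow>
        R (\<lambda>\<alpha> j. c * x \<alpha> j + y \<alpha> j) = c * R x + R y"
    and recover: "\<And>f. rs_msg k f \<Longrightarrow> R (download A astar b \<mu> f) = poly f astar"
    using assms unfolding linear_repair_scheme_def by blast
  have "\<forall>p. \<exists>m. \<forall>y. \<mu> (fst p) (snd p) y = tr (m * y)"
    using k_linear_functional_trace_form[OF lf] by blast
  from choice[OF this] obtain M where M: "\<And>p y. \<mu> (fst p) (snd p) y = tr (M p * y)"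
    by blast
  define I where "I = Sigma (A - {astar}) (\<lambda>\<alpha>. {..<b \<alpha>})"
  define r where "r p = R (\<lambda>\<alpha> j. if (\<alpha>, j) = p then 1 else 0)" for p
  define v where "v c \<alpha> = (\<Sum>j<b \<alpha>. tr (c * r (\<alpha>, j)) * M (\<alpha>, j))" for c \<alpha>
  have tr_relation: "tr (c * poly f astar) = tr (\<Sum>\<alpha>\<in>A - {astar}. v c \<alpha> * poly f \<alpha>)"
    if f: "rs_msg k f" for c f
  proof -
    define d where "d p = \<mu> (fst p) (snd p) (poly f (fst p))" for p
    have d_K: "d p \<in> K" for p using lf unfolding d_def k_linear_functional_def by simp
    have "c * poly f astar = c * (\<Sum>p\<in>I. d p * r p)"
      using recovered_symbol_expansion[OF lf R_lin recover[OF f]] unfolding d_def r_def I_def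
      by (rule arg_cong)
    also have "\<dots> = (\<Sum>p\<in>I. d p * (c * r p))"
      by (simp add: sum_distrib_left mult.left_commute)
    finally have "tr (c * poly f astar) = tr (\<Sum>p\<in>I. d p * (c * r p))" by simp
    also have "\<dots> = (\<Sum>p\<in>I. d p * tr (c * r p))"
      using d_K by (intro tr_K_combination)
    also have "\<dots> = (\<Sum>p\<in>I. tr (c * r p) * tr (M p * poly f (fst p)))"
      by (intro sum.cong refl) (simp add: d_def M mult.commute)
    also have "\<dots> = tr (\<Sum>p\<in>I. tr (c * r p) * (M p * poly f (fst p)))"
      by (simp add: tr_K_combination)
    also have "(\<Sum>p\<in>I. tr (c * r p) * (M p * poly f (fst p)))
        = (\<Sum>\<alpha>\<in>A - {astar}. \<Sum>j<b \<alpha>. tr (c * r (\<alpha>, j)) * (M (\<alpha>, j) * poly f \<alpha>))"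
      unfolding I_def by (subst sum.Sigma) (auto simp: split_def)
    also have "\<dots> = (\<Sum>\<alpha>\<in>A - {astar}. v c \<alpha> * poly f \<alpha>)"
      unfolding v_def by (simp add: sum_distrib_right mult.assoc)
    finally show ?thesis .
  qed
  have "c * poly f astar = (\<Sum>\<alpha>\<in>A - {astar}. v c \<alpha> * poly f \<alpha>)" if "rs_msg k f" for c f
    using relation_if_tr_relation[OF tr_relation that] .
  moreover have "v 0 \<alpha> = 0" for \<alpha> by (simp add: v_def)
  moreover have "q ^ t \<le> q ^ b \<alpha> * card {c. v c \<alpha> = 0}" for \<alpha>
  proof -
    have "card {c. \<forall>j<b \<alpha>. tr (c * r (\<alpha>, j)) = 0} \<le> card {c. v c \<alpha> = 0}"
      by (rule card_mono) (auto simp: v_def)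
    then show ?thesis
      by (rule order_trans[OF card_tr_kernel_ge mult_le_mono2])
  qed
  ultimately show ?thesis using that by blast
qed

lemma bandwidth_lower_bound:
  assumes A_card: "card A = q ^ t" and "astar \<in> A" and k: "k + q ^ s = q ^ t" and "s \<le> t"
    and scheme: "linear_repair_scheme K A k astar b"
  shows "(q ^ t - 1) * (t - s) \<le> bandwidth A astar b"
proof -
  define A' where "A' = A - {astar}"
  obtain v where relation: "\<And>c f. rs_msg k f \<Longrightarrow> c * poly f astar = (\<Sum>\<alpha>\<in>A'. v c \<alpha> * poly f \<alpha>)"
    and v_0: "\<And>\<alpha>. v 0 \<alpha> = 0" and many_zeros: "\<And>\<alpha>. q ^ t \<le> q ^ b \<alpha> * card {c. v c \<alpha> = 0}"
    using linear_repair_scheme_dual_relations[OF scheme] unfolding A'_def by blast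
  have card_A': "card A' = q ^ t - 1" using A_card \<open>astar \<in> A\<close> unfolding A'_def by simp
  have few_zeros: "card {\<alpha>\<in>A'. v c \<alpha> = 0} \<le> q ^ s - 1" if "c \<in> UNIV - {0}" for c
  proof -
    have "k \<le> card {\<alpha>\<in>A'. v c \<alpha> \<noteq> 0}"
      using that relation by (intro k_le_card_support_of_evaluation_relation) (auto simp: A'_def)
    moreover have "{\<alpha>\<in>A'. v c \<alpha> = 0} = A' - {\<alpha>\<in>A'. v c \<alpha> \<noteq> 0}" by auto
    ultimately show ?thesis using card_A' k by (simp add: card_Diff_subset)
  qed
  have "(\<Sum>\<alpha>\<in>A'. card {c. v c \<alpha> = 0}) \<le> card A' + (card (UNIV::'a set) - 1) * (q ^ s - 1)"
    using sum_card_zero_sets_le[of UNIV A' 0 "\<lambda>c \<alpha>. v c \<alpha> = 0", OF _ _ _ v_0 few_zeros] by simp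
  also have "\<dots> = card A' * q ^ s"
  proof -
    obtain m where "q ^ s = Suc m" using q_ge_2 not0_implies_Suc by fastforce
    then show ?thesis using card_A' UNIV_card by simp
  qed
  finally have total: "(\<Sum>\<alpha>\<in>A'. card {c. v c \<alpha> = 0}) \<le> card A' * q ^ s" .
  have "card A' * (t - s) \<le> (\<Sum>\<alpha>\<in>A'. b \<alpha>)"
    by (rule sum_exponents_ge_if_sum_counts_le[OF q_ge_2 \<open>s \<le> t\<close> many_zeros total])
  then show ?thesis using card_A' unfolding bandwidth_def A'_def by simp
qed

end

section \<open>The check polynomials\<close>

lemma bandwidth_bits_le:
  "bandwidth A astar b \<le> N \<Longrightarrow> 1 \<le> q \<Longrightarrow> bandwidth_bits q A astar b \<le> real N * log 2 (real q)"
  unfolding bandwidth_bits_def by (intro mult_right_mono) auto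

locale check_polynomials = subfield_extension K q t for K :: "'a::{field,finite} set" and q t +
  fixes W :: "'a set" and s :: nat and astar :: 'a and \<beta> :: "nat \<Rightarrow> 'a"
  assumes W_subspace: "k_subspace K W" and W_card: "card W = q ^ s"
    and \<beta>_basis: "k_basis K (\<beta> ` {1..t})"
begin

abbreviation "g \<equiv> check_poly W astar \<beta>"

definition check_const :: 'a where
  "check_const = (\<Prod>w\<in>W - {0}. inverse w)"

lemma zero_in_W: "0 \<in> W"
  using W_subspace unfolding k_subspace_def by simp

lemma check_const_nonzero: "check_const \<noteq> 0"
  unfolding check_const_def by (simp add: prod_zero_iff)

lemma finite_basis: "finite (\<beta> ` {1..t})" and span_basis: "k_span K (\<beta> ` {1..t}) = UNIV"
  using \<beta>_basis unfolding k_basis_def by auto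

lemma degree_check_poly: "degree (g i) \<le> q ^ s - 1"
proof -
  have "degree (g i) \<le> degree (\<Prod>w\<in>W - {0}. [:- (astar - inverse w * \<beta> i), 1:])"
    unfolding check_poly_def by (rule degree_smult_le)
  also have "\<dots> = q ^ s - 1"
    using zero_in_W W_card by (simp add: degree_prod_monic_linear)
  finally show ?thesis .
qed

lemma poly_check_poly:
  "poly (g i) \<alpha> = check_const * \<beta> i * (\<Prod>w\<in>W - {0}. (\<beta> i + (\<alpha> - astar) * w))"
proof -
  have "poly [:- (astar - inverse w * \<beta> i), 1:] \<alpha> = \<alpha> - (astar - inverse w * \<beta> i)" for w
    by simp
  then have "poly (g i) \<alpha> = \<beta> i * (\<Prod>w\<in>W - {0}. (\<alpha> - (astar - inverse w * \<beta> i)))"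
    unfolding check_poly_def poly_smult poly_prod by presburger
  also have "(\<Prod>w\<in>W - {0}. (\<alpha> - (astar - inverse w * \<beta> i)))
      = (\<Prod>w\<in>W - {0}. inverse w * (\<beta> i + (\<alpha> - astar) * w))"
    by (intro prod.cong refl) (auto simp: field_simps)
  also have "\<dots> = check_const * (\<Prod>w\<in>W - {0}. (\<beta> i + (\<alpha> - astar) * w))"
    unfolding check_const_def by (simp add: prod.distrib)
  finally show ?thesis by (simp add: mult.assoc mult.left_commute)
qed

lemma poly_check_poly_astar: "poly (g i) astar = check_const * \<beta> i ^ (q ^ s)"
proof -
  have "q ^ s = Suc (card (W - {0}))" using zero_in_W W_card q_ge_2 by simp
  then show ?thesis by (simp add: poly_check_poly mult.assoc)
qed

lemma k_span_check_values_astar: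
  assumes "c \<noteq> 0"
  shows "k_span K ((\<lambda>i. c * poly (g i) astar) ` {1..t}) = UNIV"
proof -
  define L where "L x = (c * check_const) * x ^ (q ^ s)" for x :: 'a
  have L: "k_linear K L" unfolding L_def by (rule k_linear_mult_left[OF k_linear_frobenius])
  have "inj L" using inj_frobenius check_const_nonzero assms unfolding L_def inj_def by simp
  then have "range L = UNIV" by (simp add: finite_UNIV_inj_surj)
  moreover have "(\<lambda>i. c * poly (g i) astar) ` {1..t} = L ` \<beta> ` {1..t}"
    unfolding L_def poly_check_poly_astar image_image by (simp add: mult.assoc)
  ultimately show ?thesis using k_span_image_basis[OF L finite_basis span_basis] by simp
qed

lemma k_rank_check_values_astar: "k_rank K ((\<lambda>i. poly (g i) astar) ` {1..t}) = t"
  using k_span_check_values_astar[of 1] card_k_span[of "(\<lambda>i. poly (g i) astar) ` {1..t}"]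
    UNIV_card q_ge_2
  by (simp add: power_inject_exp)

definition scaled_W :: "'a \<Rightarrow> 'a set" where
  "scaled_W d = (\<lambda>w. d * w) ` W"

lemma k_subspace_scaled_W: "k_subspace K (scaled_W d)"
  using W_subspace unfolding k_subspace_def scaled_W_def
  by (auto simp: distrib_left[symmetric] mult.left_commute intro!: imageI)

lemma card_scaled_W: "d \<noteq> 0 \<Longrightarrow> card (scaled_W d) = q ^ s"
  unfolding scaled_W_def using W_card by (subst card_image) (auto simp: inj_on_def)

lemma prod_scaled_W:
  assumes "d \<noteq> 0"
  shows "x * (\<Prod>w\<in>W - {0}. (x + d * w)) = (\<Prod>u\<in>scaled_W d. (x - u))"
proof -
  have "(\<Prod>u\<in>scaled_W d. (x - u)) = (\<Prod>w\<in>W. (x - d * w))"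
    unfolding scaled_W_def by (subst prod.reindex) (auto simp: inj_on_def assms)
  also have "\<dots> = x * (\<Prod>w\<in>W - {0}. (x - d * w))"
    using zero_in_W by (simp add: prod.remove)
  also have "(\<Prod>w\<in>W - {0}. (x - d * w)) = (\<Prod>w\<in>W - {0}. (x + d * w))"
    by (rule prod.reindex_bij_witness[of _ uminus uminus])
       (auto simp: k_subspace_uminus[OF W_subspace])
  finally show ?thesis by simp
qed

text \<open>Away from a*, the values g_i(a) are the images of the basis under a nonzero multiple of
  the subspace polynomial of (a - a*) W, a K-linear map whose kernel contains that q^s-element
  space.\<close>

lemma k_rank_check_values_le:
  assumes "\<alpha> \<noteq> astar"
  shows "k_rank K ((\<lambda>i. poly (g i) \<alpha>) ` {1..t}) + s \<le> t"
proof -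
  define d where "d = \<alpha> - astar"
  have d: "d \<noteq> 0" using assms d_def by simp
  define L where "L x = check_const * (\<Prod>u\<in>scaled_W d. (x - u))" for x :: 'a
  have L: "k_linear K L" unfolding L_def
    by (intro k_linear_mult_left k_linear_subspace_polynomial k_subspace_scaled_W)
       (simp add: card_scaled_W[OF d] K_power_q_power)
  have g_values: "(\<lambda>i. poly (g i) \<alpha>) ` {1..t} = L ` \<beta> ` {1..t}"
    unfolding image_image L_def
    by (intro image_cong refl) (simp add: poly_check_poly d_def[symmetric] prod_scaled_W[OF d] mult.assoc)
  have "scaled_W d \<subseteq> {x. L x = L 0}"
  proof
    fix u assume "u \<in> scaled_W d"
    then have "L u = 0" unfolding L_def by (auto simp: prod_zero_iff)
    then show "u \<in> {x. L x = L 0}" using k_linear_0[OF L] by simp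
  qed
  then have "card (scaled_W d) \<le> card {x. L x = L 0}" by (intro card_mono) auto
  moreover have "card (range L) * card {x. L x = L 0} = q ^ t"
    using card_range_mult_card_kernel[of L] k_linear_diff[OF L] k_linear_0[OF L] UNIV_card
    by (metis eq_iff_diff_eq_0)
  ultimately have "card (range L) * q ^ s \<le> q ^ t"
    using card_scaled_W[OF d] by (metis mult_le_mono2)
  moreover have "card (range L) = q ^ k_rank K (L ` \<beta> ` {1..t})"
    using k_span_image_basis[OF L finite_basis span_basis] card_k_span[of "L ` \<beta> ` {1..t}"] by simp
  ultimately show ?thesis using g_values q_ge_2 by (simp add: power_add[symmetric] power_le_imp_le_exp)
qed

lemma check_values_coordinates:
  "\<exists>E C. \<forall>\<alpha>. \<forall>i\<in>{1..t}.
    (\<forall>j. C \<alpha> i j \<in> K) \<and> poly (g i) \<alpha> = (\<Sum>j<check_b K g t \<alpha>. C \<alpha> i j * E \<alpha> j)"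
proof -
  have "\<forall>\<alpha>. \<exists>e c. \<forall>v\<in>(\<lambda>i. poly (g i) \<alpha>) ` {1..t}.
      (\<forall>j. c v j \<in> K) \<and> v = (\<Sum>j<check_b K g t \<alpha>. c v j * e j)"
    unfolding check_b_def by (intro allI k_span_coordinates) simp
  from choice[OF this] obtain E where "\<forall>\<alpha>. \<exists>c. \<forall>v\<in>(\<lambda>i. poly (g i) \<alpha>) ` {1..t}.
      (\<forall>j. c v j \<in> K) \<and> v = (\<Sum>j<check_b K g t \<alpha>. c v j * E \<alpha> j)" ..
  from choice[OF this] obtain C where "\<forall>\<alpha>. \<forall>v\<in>(\<lambda>i. poly (g i) \<alpha>) ` {1..t}.
      (\<forall>j. C \<alpha> v j \<in> K) \<and> v = (\<Sum>j<check_b K g t \<alpha>. C \<alpha> v j * E \<alpha> j)" ..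
  then show ?thesis by (intro exI[of _ E] exI[of _ "\<lambda>\<alpha> i. C \<alpha> (poly (g i) \<alpha>)"]) simp
qed

end

locale rs_repair = check_polynomials K q t W s astar \<beta>
  for K :: "'a::{field,finite} set" and q t W s astar \<beta> +
  fixes A :: "'a set" and k n :: nat
  assumes A_card: "card A = n" and astar_in_A: "astar \<in> A" and redundancy: "n - k \<ge> q ^ s"
begin

definition lagrange_weight :: "'a \<Rightarrow> 'a" where
  "lagrange_weight \<alpha> = inverse (\<Prod>\<gamma>\<in>A - {\<alpha>}. (\<alpha> - \<gamma>))"

lemma lagrange_weight_nonzero: "\<alpha> \<in> A \<Longrightarrow> lagrange_weight \<alpha> \<noteq> 0"
  unfolding lagrange_weight_def by (simp add: prod_zero_iff)

lemma degree_check_poly_le_redundancy: "degree (g i) \<le> n - k - 1"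
  using degree_check_poly[of i] redundancy by simp

lemma check_equation:
  assumes "rs_msg k f"
  shows "(\<Sum>\<alpha>\<in>A. lagrange_weight \<alpha> * poly (g i) \<alpha> * poly f \<alpha>) = 0"
proof -
  have "g i * f = 0 \<or> degree (g i * f) + 2 \<le> card A"
  proof (cases "f = 0")
    case False
    then have "degree f < k" using assms unfolding rs_msg_def by simp
    moreover have "q ^ s \<ge> 1" using q_ge_2 by simp
    ultimately show ?thesis
      using degree_mult_le[of "g i" f] degree_check_poly_le_redundancy[of i] redundancy A_card
      by linarith
  qed simp
  from lagrange_weighted_sum_eq_0[OF _ this] show ?thesis
    unfolding lagrange_weight_def by (simp add: mult_ac)
qed

lemma tr_check_equation:
  assumes "rs_msg k f"
  shows "tr (lagrange_weight astar * poly (g i) astar * poly f astar)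
       = - (\<Sum>\<alpha>\<in>A - {astar}. tr (lagrange_weight \<alpha> * poly (g i) \<alpha> * poly f \<alpha>))"
proof -
  have "lagrange_weight astar * poly (g i) astar * poly f astar
      + (\<Sum>\<alpha>\<in>A - {astar}. lagrange_weight \<alpha> * poly (g i) \<alpha> * poly f \<alpha>) = 0"
    using check_equation[OF assms, of i] astar_in_A by (simp add: sum.remove)
  then have "tr (lagrange_weight astar * poly (g i) astar * poly f astar)
      + (\<Sum>\<alpha>\<in>A - {astar}. tr (lagrange_weight \<alpha> * poly (g i) \<alpha> * poly f \<alpha>)) = 0"
    by (metis tr_0 tr_add tr_sum)
  then show ?thesis by (simp add: eq_neg_iff_add_eq_0)
qed

text \<open>Node a sends the traces tr(lambda_a e_j f(a)) for a K-basis e_j of the span of the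
  g_i(a); these determine tr(lambda_a g_i(a) f(a)) for every i, hence by the trace of the check
  equations the t traces tr(lambda_a* g_i(a*) f(a*)), which determine f(a*) through the dual
  basis.\<close>

lemma check_repair_scheme: "linear_repair_scheme K A k astar (check_b K g t)"
proof -
  define b where "b = check_b K g t"
  obtain E C where coords: "\<And>\<alpha> i. i \<in> {1..t} \<Longrightarrow>
      (\<forall>j. C \<alpha> i j \<in> K) \<and> poly (g i) \<alpha> = (\<Sum>j<b \<alpha>. C \<alpha> i j * E \<alpha> j)"
    using check_values_coordinates unfolding b_def by blast
  define u where "u i = lagrange_weight astar * poly (g i) astar" for i
  obtain \<nu> where \<nu>: "\<And>z. z = (\<Sum>i\<in>{1..t}. tr (u i * z) * \<nu> i)"
    using tr_dual_basis k_span_check_values_astar[OF lagrange_weight_nonzero[OF astar_in_A]]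
    unfolding u_def by blast
  define \<mu> where "\<mu> \<alpha> j y = tr (lagrange_weight \<alpha> * E \<alpha> j * y)" for \<alpha> j y
  define Y where "Y i x = - (\<Sum>\<alpha>\<in>A - {astar}. \<Sum>j<b \<alpha>. C \<alpha> i j * x \<alpha> j)"
    for i and x :: "'a \<Rightarrow> nat \<Rightarrow> 'a"
  define R where "R x = (\<Sum>i\<in>{1..t}. Y i x * \<nu> i)" for x
  have "k_linear_functional K (\<mu> \<alpha> j)" for \<alpha> j
    unfolding k_linear_functional_def \<mu>_def
    by (simp add: distrib_left tr_add tr_mult_K mult.left_commute)
  moreover have "R (\<lambda>\<alpha> j. c * x \<alpha> j + y \<alpha> j) = c * R x + R y" for c x y
  proof -
    have "Y i (\<lambda>\<alpha> j. c * x \<alpha> j + y \<alpha> j) = c * Y i x + Y i y" for i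
      unfolding Y_def by (simp add: distrib_left sum.distrib sum_distrib_left mult.left_commute)
    then show ?thesis
      unfolding R_def by (simp add: distrib_right sum.distrib sum_distrib_left mult.assoc)
  qed
  moreover have "R (download A astar b \<mu> f) = poly f astar" if f: "rs_msg k f" for f
  proof -
    have node: "(\<Sum>j<b \<alpha>. C \<alpha> i j * download A astar b \<mu> f \<alpha> j)
        = tr (lagrange_weight \<alpha> * poly (g i) \<alpha> * poly f \<alpha>)" if "\<alpha> \<in> A - {astar}" "i \<in> {1..t}" for \<alpha> i
    proof -
      have "(\<Sum>j<b \<alpha>. C \<alpha> i j * download A astar b \<mu> f \<alpha> j)
          = (\<Sum>j<b \<alpha>. C \<alpha> i j * tr (lagrange_weight \<alpha> * E \<alpha> j * poly f \<alpha>))"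
        using that(1) unfolding download_def \<mu>_def by (intro sum.cong) auto
      then show ?thesis using coords[OF that(2), of \<alpha>] by (simp add: tr_K_combination_mult)
    qed
    have "Y i (download A astar b \<mu> f) = tr (u i * poly f astar)" if "i \<in> {1..t}" for i
      using tr_check_equation[OF f, of i] node[OF _ that] unfolding Y_def u_def by simp
    then have "R (download A astar b \<mu> f) = (\<Sum>i\<in>{1..t}. tr (u i * poly f astar) * \<nu> i)"
      unfolding R_def by simp
    then show ?thesis using \<nu>[of "poly f astar"] by simp
  qed
  ultimately show ?thesis unfolding linear_repair_scheme_def b_def[symmetric] by blast
qed

lemma check_bandwidth_le: "bandwidth A astar (check_b K g t) \<le> (n - 1) * (t - s)"
proof -
  have "bandwidth A astar (check_b K g t) \<le> (\<Sum>\<alpha>\<in>A - {astar}. t - s)"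
    unfolding bandwidth_def check_b_def
    by (intro sum_mono) (use k_rank_check_values_le in fastforce)
  also have "\<dots> = (n - 1) * (t - s)" using A_card astar_in_A by simp
  finally show ?thesis .
qed

end

theorem theorem3:
  fixes K :: "'a::{field,finite} set" and q t s n k :: nat
    and A W :: "'a set" and astar :: 'a and \<beta> :: "nat \<Rightarrow> 'a"
  assumes q_pp: "\<exists>p m. prime p \<and> m > 0 \<and> q = p ^ m"
    and t_pos: "t \<ge> 1"
    and K_sub: "is_subfield K" and K_card: "card K = q"
    and F_card: "card (UNIV :: 'a set) = q ^ t"
    and A_card: "card A = n"
    and r_ge: "n - k \<ge> q ^ s" and s_lt: "s < t"
    and W_sub: "k_subspace K W" and W_dim: "k_rank K W = s"
    and astar_in: "astar \<in> A"
    and \<beta>_inj: "inj_on \<beta> {1..t}" and \<beta>_basis: "k_basis K (\<beta> ` {1..t})"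
  shows "(\<forall>i\<in>{1..t}. degree (check_poly W astar \<beta> i) \<le> n - k - 1)
       \<and> k_rank K ((\<lambda>i. poly (check_poly W astar \<beta> i) astar) ` {1..t}) = t
       \<and> linear_repair_scheme K A k astar (check_b K (check_poly W astar \<beta>) t)
       \<and> bandwidth_bits q A astar (check_b K (check_poly W astar \<beta>) t)
           \<le> real ((n - 1) * (t - s)) * log 2 (real q)
       \<and> (n = q ^ t \<and> n - k = q ^ s \<longrightarrow>
           (\<forall>b. linear_repair_scheme K A k astar b \<longrightarrow>
              bandwidth_bits q A astar (check_b K (check_poly W astar \<beta>) t)
                \<le> bandwidth_bits q A astar b))"
proof -
  interpret subfield_extension K q t
    using q_pp t_pos K_sub K_card F_card by unfold_locales auto
  have "card W = q ^ s"
    using k_span_subspace_eq[OF W_sub] card_k_span[of W] W_dim by simp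
  then interpret rs_repair K q t W s astar \<beta> A k n
    using W_sub \<beta>_basis A_card astar_in r_ge by unfold_locales auto
  let ?b = "check_b K g t"
  have "bandwidth_bits q A astar ?b \<le> real ((n - 1) * (t - s)) * log 2 (real q)"
    using check_bandwidth_le q_ge_2 by (intro bandwidth_bits_le) auto
  moreover have "bandwidth_bits q A astar ?b \<le> bandwidth_bits q A astar b"
    if "n = q ^ t" "n - k = q ^ s" "linear_repair_scheme K A k astar b" for b
  proof -
    have "q ^ s > 0" using q_ge_2 by simp
    then have "k + q ^ s = q ^ t" using that(1,2) by linarith
    then have "(q ^ t - 1) * (t - s) \<le> bandwidth A astar b"
      using bandwidth_lower_bound[OF _ astar_in _ _ that(3)] A_card that(1) s_lt by simp
    then have "bandwidth A astar ?b \<le> bandwidth A astar b"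
      using check_bandwidth_le that(1) by simp
    then show ?thesis unfolding bandwidth_bits_def using q_ge_2 by (intro mult_right_mono) auto
  qed
  ultimately show ?thesis
    using degree_check_poly_le_redundancy k_rank_check_values_astar check_repair_scheme by blast
qed

end
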